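(* Let $\alpha,\beta\in[0,r]\cap A$ with $\alpha<\beta$, let $I=(\alpha,\beta)$, and let $x\in\mathrm{F}_I$ satisfy $\mathrm{fix}(x)\cap I\cap A=\varnothing$. Then the centralizer of $x$ in $\mathrm{F}_I$ is cyclic.
   Context: Fix an admissible triple $(r,\Lambda,A)$: $r>0$, $\Lambda\le\mathbb R^*_+$ a nontrivial multiplicative subgroup, $A\subseteq\mathbb R$ an additive subgroup with $r\in A$ and $\Lambda A\subseteq A$. $\mathrm{F}=\mathrm{F}(r,\Lambda,A)$ is the group of homeomorphisms of $[0,r)$ that are piecewise affine with finitely many breakpoints, all slopes in $\Lambda$, breakpoints and their images in $A$; maps act on the right. $\mathrm{fix}(g)$ is the fixed-point set of $g$, $\mathrm{supp}(g)$ its complement, and $\mathrm{F}_S=\{x\in\mathrm{F}\mid\mathrm{supp}(x)\subseteq S\}$. *)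

theory Defs
  imports "HOL-Analysis.Analysis"
begin

definition admissible :: "real \<Rightarrow> real set \<Rightarrow> real set \<Rightarrow> bool" where
  "admissible r \<Lambda> A \<longleftrightarrow>
     r > 0
   \<and> \<Lambda> \<subseteq> {0<..} \<and> 1 \<in> \<Lambda>
   \<and> (\<forall>a\<in>\<Lambda>. \<forall>b\<in>\<Lambda>. a * b \<in> \<Lambda>)
   \<and> (\<forall>a\<in>\<Lambda>. inverse a \<in> \<Lambda>)
   \<and> \<Lambda> \<noteq> {1}
   \<and> 0 \<in> A \<and> (\<forall>a\<in>A. \<forall>b\<in>A. a + b \<in> A) \<and> (\<forall>a\<in>A. - a \<in> A)
   \<and> r \<in> A
   \<and> (\<forall>l\<in>\<Lambda>. \<forall>a\<in>A. l * a \<in> A)"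

text \<open>Elements of F(r,Lambda,A): homeomorphisms of [0,r), represented as functions
  on the reals that are the identity outside [0,r). The finite set P contains all
  breakpoints (together with 0 and r); on each interval between consecutive points
  of P the map is affine with slope in Lambda; points of P and their images lie in A.\<close>
definition Fgrp :: "real \<Rightarrow> real set \<Rightarrow> real set \<Rightarrow> (real \<Rightarrow> real) set" where
  "Fgrp r \<Lambda> A = {f.
      bij_betw f {0..<r} {0..<r}
    \<and> continuous_on {0..<r} f
    \<and> (\<forall>t. t \<notin> {0..<r} \<longrightarrow> f t = t)
    \<and> (\<exists>P. finite P \<and> P \<subseteq> A \<inter> {0..r} \<and> 0 \<in> P \<and> r \<in> P
         \<and> (\<forall>p\<in>P. p < r \<longrightarrow> f p \<in> A)
         \<and> (\<forall>a\<in>P. \<forall>b\<in>P. a < b \<and> (\<forall>q\<in>P. \<not> (a < q \<and> q < b)) \<longrightarrow>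
              (\<exists>l\<in>\<Lambda>. \<exists>c. \<forall>t\<in>{a..<b}. f t = l * t + c)))}"

definition fixset :: "real \<Rightarrow> (real \<Rightarrow> real) \<Rightarrow> real set" where
  "fixset r g = {t \<in> {0..<r}. g t = t}"

definition suppset :: "real \<Rightarrow> (real \<Rightarrow> real) \<Rightarrow> real set" where
  "suppset r g = {0..<r} - fixset r g"

definition Fsupp :: "real \<Rightarrow> real set \<Rightarrow> real set \<Rightarrow> real set \<Rightarrow> (real \<Rightarrow> real) set" where
  "Fsupp r \<Lambda> A S = {g \<in> Fgrp r \<Lambda> A. suppset r g \<subseteq> S}"

definition zpow :: "(real \<Rightarrow> real) \<Rightarrow> int \<Rightarrow> (real \<Rightarrow> real)" where
  "zpow g n = (if 0 \<le> n then g ^^ nat n else (inv g) ^^ nat (- n))"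

definition centralizer_in :: "(real \<Rightarrow> real) set \<Rightarrow> (real \<Rightarrow> real) \<Rightarrow> (real \<Rightarrow> real) set" where
  "centralizer_in H x = {y \<in> H. y \<circ> x = x \<circ> y}"

definition cyclic_set :: "(real \<Rightarrow> real) set \<Rightarrow> bool" where
  "cyclic_set C \<longleftrightarrow> (\<exists>g. C = range (zpow g))"

end

theory Submission
  imports Defs
begin

(*
  Every y in C fixes alpha, so near alpha it is linear with a slope rho(y) in Lambda (its right germ).
  (1) rho is a homomorphism from C to the positive reals.
  (2) rho is injective: if y, z in C agree near alpha, their agreement propagates to the right,
      across points moved by x by conjugating with x or x^-1, and across fixed points T of x
      because T is not in A, hence not a breakpoint of y or z.
  (3) rho(C) has a gap above 1.  Replacing x by x^-1 we may assume x expands near alpha with slope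
      s > 1.  Let p be the first fixed point of x to the right of alpha; x contracts near p.  A large
      power G = x^N sends a fundamental domain [u0, x u0] close to p, and G has a non-affine point
      there.  Every y in C commutes with G and is linear near alpha and near p, so multiplication by
      rho(y) (around alpha) maps non-affine points of G to non-affine points; counting them gives
      rho(y)^k > s whenever rho(y) > 1, where k is the number of such points.
  (4) A subgroup of the positive reals with a gap above 1 is cyclic; since rho is injective, so is C.
*)

lemma strict_mono_surj_isCont:
  fixes f :: "real \<Rightarrow> real"
  assumes sm: "strict_mono f" and su: "surj f"
  shows "isCont f t"
proof (rule continuous_at_eps_delta[THEN iffD2], intro allI impI)
  fix e :: real assume e: "e > 0"
  obtain a where a: "f a = f t - e" using surjD[OF su] by metis
  obtain b where b: "f b = f t + e" using surjD[OF su] by metis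
  have "f a < f t" "f t < f b" using a b e by simp_all
  then have at: "a < t" and tb: "t < b" using strict_mono_less[OF sm] by simp_all
  show "\<exists>d>0. \<forall>y. dist y t < d \<longrightarrow> dist (f y) (f t) < e"
  proof (intro exI[of _ "min (t - a) (b - t)"] conjI allI impI)
    show "min (t - a) (b - t) > 0" using at tb by simp
    fix y assume "dist y t < min (t - a) (b - t)"
    then have "a < y" "y < b" by (auto simp: dist_real_def)
    then have "f a < f y" "f y < f b" using sm by (auto simp: strict_mono_less)
    then show "dist (f y) (f t) < e" using a b by (auto simp: dist_real_def)
  qed
qed

lemma continuous_agree_at_left:
  fixes f g :: "real \<Rightarrow> real"
  assumes "isCont f p" "isCont g p" "a < p" "\<And>t. a < t \<Longrightarrow> t < p \<Longrightarrow> f t = g t"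
  shows "f p = g p"
proof -
  have f: "(f \<longlongrightarrow> f p) (at_left p)" using assms(1) by (simp add: isCont_def filterlim_at_split)
  have g: "(g \<longlongrightarrow> g p) (at_left p)" using assms(2) by (simp add: isCont_def filterlim_at_split)
  have ev: "eventually (\<lambda>t. f t = g t) (at_left p)"
    using assms(3,4) eventually_at_left_real[OF assms(3)] by (auto elim: eventually_mono)
  have "(g \<longlongrightarrow> f p) (at_left p)" using tendsto_cong[OF ev] f by simp
  then show ?thesis using g tendsto_unique[OF trivial_limit_at_left_real] by blast
qed

lemma agreement_continuation:
  fixes f g :: "real \<Rightarrow> real"
  assumes ab: "a < b" and cont: "\<And>t. isCont f t" "\<And>t. isCont g t"
    and start: "e > 0" "\<And>u. a \<le> u \<Longrightarrow> u < a + e \<Longrightarrow> f u = g u"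
    and extend: "\<And>T. a < T \<Longrightarrow> T < b \<Longrightarrow> \<forall>u\<in>{a..T}. f u = g u \<Longrightarrow> \<exists>T'>T. \<forall>u\<in>{T..T'}. f u = g u"
  shows "\<forall>u\<in>{a..b}. f u = g u"
proof -
  define D where "D = {t \<in> {a..b}. \<forall>u\<in>{a..t}. f u = g u}"
  define t0 where "t0 = min (a + e / 2) b"
  have t0: "a < t0" "t0 \<le> b" "t0 < a + e" unfolding t0_def using start ab by auto
  have t0D: "t0 \<in> D" unfolding D_def using t0 start by auto
  have bdd: "bdd_above D" unfolding D_def by (auto intro: bdd_aboveI[of _ b])
  define T where "T = Sup D"
  have T1: "t0 \<le> T" unfolding T_def by (rule cSup_upper[OF t0D bdd])
  have T2: "T \<le> b" unfolding T_def using t0D by (intro cSup_least) (auto simp: D_def)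
  have below: "f u = g u" if "a \<le> u" "u < T" for u
  proof -
    have "D \<noteq> {}" "u < Sup D" using t0D that unfolding T_def by auto
    then obtain t where "t \<in> D" "u < t" using less_cSupD[of D u] by blast
    then show ?thesis using that unfolding D_def by auto
  qed
  have "f T = g T"
    by (rule continuous_agree_at_left[OF cont, of a]) (use T1 t0 below in auto)
  then have agree_T: "\<forall>u\<in>{a..T}. f u = g u" using below by (auto simp: le_less)
  have "T = b"
  proof (rule ccontr)
    assume "T \<noteq> b"
    then have "a < T" "T < b" using T1 T2 t0 by simp_all
    then obtain T' where T': "T < T'" "\<forall>u\<in>{T..T'}. f u = g u"
      using extend agree_T by blast
    have "min T' b \<in> D" unfolding D_def using agree_T T' T1 T2 t0 by auto
    then have "min T' b \<le> T" unfolding T_def by (rule cSup_upper[OF _ bdd])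
    then show False using T' T2 \<open>T \<noteq> b\<close> by linarith
  qed
  then show ?thesis using agree_T by simp
qed

lemma agreement_transport:
  fixes y z w :: "real \<Rightarrow> real"
  assumes w: "strict_mono w" "surj w" "w a = a"
    and yw: "\<And>t. y (w t) = w (y t)" and zw: "\<And>t. z (w t) = w (z t)"
    and agree: "\<forall>u\<in>{a..T}. y u = z u"
  shows "\<forall>u\<in>{a..w T}. y u = z u"
proof
  fix u assume u: "u \<in> {a..w T}"
  obtain v where v: "u = w v" using surjD[OF w(2)] by blast
  have "w a \<le> w v" "w v \<le> w T" using u v w(3) by auto
  then have "v \<in> {a..T}" using strict_mono_less_eq[OF w(1)] by simp
  then have "y v = z v" using agree by blast
  then show "y u = z u" unfolding v yw zw by simp
qed

lemma affine_coeffs_unique: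
  fixes a b c d u1 u2 :: real
  assumes "u1 \<noteq> u2" "a * u1 + b = c * u1 + d" "a * u2 + b = c * u2 + d"
  shows "a = c" "b = d"
proof -
  have "(a - c) * (u1 - u2) = 0" using assms by (simp add: algebra_simps)
  then show "a = c" using assms(1) by simp
  then show "b = d" using assms(2) by simp
qed

definition consec :: "real set \<Rightarrow> real \<Rightarrow> real \<Rightarrow> bool" where
  "consec P a b \<longleftrightarrow> a \<in> P \<and> b \<in> P \<and> a < b \<and> (\<forall>q\<in>P. \<not> (a < q \<and> q < b))"

lemma consec_enclosing:
  fixes P :: "real set"
  assumes "finite P" "u < v" "a0 \<in> P" "a0 \<le> u" "b0 \<in> P" "v \<le> b0"
    and "\<forall>q\<in>P. \<not> (u < q \<and> q < v)"
  shows "\<exists>a b. consec P a b \<and> a \<le> u \<and> v \<le> b"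
proof -
  define a where "a = Max {q\<in>P. q \<le> u}"
  define b where "b = Min {q\<in>P. u < q}"
  have fa: "finite {q\<in>P. q \<le> u}" "{q\<in>P. q \<le> u} \<noteq> {}" using assms by auto
  have fb: "finite {q\<in>P. u < q}" "{q\<in>P. u < q} \<noteq> {}" using assms by auto
  have aP: "a \<in> P" "a \<le> u" using Max_in[OF fa] unfolding a_def by auto
  have bP: "b \<in> P" "u < b" using Min_in[OF fb] unfolding b_def by auto
  have bv: "v \<le> b" using assms(7) bP by force
  have "\<not> (a < q \<and> q < b)" if "q \<in> P" for q
  proof (cases "q \<le> u")
    case True then have "q \<le> a" unfolding a_def using fa that by auto
    then show ?thesis by simp
  next
    case False then have "b \<le> q" unfolding b_def using fb that by auto
    then show ?thesis by simp
  qed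
  then have "consec P a b" using aP bP bv unfolding consec_def by auto
  then show ?thesis using aP bv by blast
qed

lemma consec_containing:
  assumes "finite P" "a0 \<in> P" "a0 \<le> t" "b0 \<in> P" "t < b0"
  shows "\<exists>a b. consec P a b \<and> a \<le> t \<and> t < b"
proof -
  define v where "v = Min {q\<in>P. t < q}"
  have fb: "finite {q\<in>P. t < q}" "{q\<in>P. t < q} \<noteq> {}" using assms by auto
  have v: "v \<in> P" "t < v" using Min_in[OF fb] unfolding v_def by auto
  have "\<forall>q\<in>P. \<not> (t < q \<and> q < v)" unfolding v_def using fb by auto
  from consec_enclosing[OF assms(1) v(2) assms(2,3) v(1) order_refl this] obtain a b
    where "consec P a b" "a \<le> t" "v \<le> b" by auto
  then show ?thesis using v by (intro exI[of _ a] exI[of _ b]) auto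
qed

definition affnear :: "(real \<Rightarrow> real) \<Rightarrow> real \<Rightarrow> bool" where
  "affnear f t \<longleftrightarrow> (\<exists>e>0. \<exists>a b. \<forall>u. \<bar>u - t\<bar> < e \<longrightarrow> f u = a * u + b)"

lemma affnearI: "e > 0 \<Longrightarrow> (\<And>u. \<bar>u - t\<bar> < e \<Longrightarrow> f u = a * u + b) \<Longrightarrow> affnear f t"
  unfolding affnear_def by blast

lemma affnear_comp:
  assumes g: "affnear g v" and f: "affnear f (g v)" shows "affnear (\<lambda>u. f (g u)) v"
proof -
  obtain e1 a b where e1: "e1 > 0" "\<And>u. \<bar>u - v\<bar> < e1 \<Longrightarrow> g u = a * u + b"
    using g unfolding affnear_def by auto
  obtain e2 c d where e2: "e2 > 0" "\<And>w. \<bar>w - g v\<bar> < e2 \<Longrightarrow> f w = c * w + d"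
    using f unfolding affnear_def by auto
  define e where "e = min e1 (e2 / (\<bar>a\<bar> + 1))"
  have epos: "e > 0" unfolding e_def using e1 e2 by (simp add: add_pos_nonneg)
  show ?thesis
  proof (rule affnearI[OF epos])
    fix u assume u: "\<bar>u - v\<bar> < e"
    have gu: "g u = a * u + b" using e1 u unfolding e_def by simp
    have gv: "g v = a * v + b" using e1 by simp
    have "\<bar>g u - g v\<bar> = \<bar>a\<bar> * \<bar>u - v\<bar>" using gu gv by (simp add: abs_mult[symmetric] algebra_simps)
    also have "\<dots> \<le> \<bar>a\<bar> * (e2 / (\<bar>a\<bar> + 1))"
      using u unfolding e_def by (intro mult_left_mono) auto
    also have "\<dots> = e2 * (\<bar>a\<bar> / (\<bar>a\<bar> + 1))" by simp
    also have "\<dots> < e2 * 1" using e2 by (intro mult_strict_left_mono) auto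
    finally have "f (g u) = c * g u + d" using e2 by simp
    then show "f (g u) = (c * a) * u + (c * b + d)" using gu by (simp add: algebra_simps)
  qed
qed

lemma affnear_cancel:
  assumes h: "affnear (\<lambda>u. k (G u)) v" and G: "isCont G v" and eta: "\<eta> > 0"
    and k: "\<And>w. \<bar>w - G v\<bar> < \<eta> \<Longrightarrow> k w = \<mu> * w + c" and mu: "\<mu> \<noteq> 0"
  shows "affnear G v"
proof -
  obtain e1 a b where e1: "e1 > 0" "\<And>u. \<bar>u - v\<bar> < e1 \<Longrightarrow> k (G u) = a * u + b"
    using h unfolding affnear_def by auto
  obtain e2 where e2: "e2 > 0" "\<And>u. dist u v < e2 \<Longrightarrow> dist (G u) (G v) < \<eta>"
    using G eta unfolding continuous_at_eps_delta by blast
  show ?thesis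
  proof (rule affnearI[of "min e1 e2" _ _ "a / \<mu>" "(b - c) / \<mu>"])
    show "min e1 e2 > 0" using e1 e2 by simp
    fix u assume u: "\<bar>u - v\<bar> < min e1 e2"
    then have "k (G u) = \<mu> * G u + c" using e2 k by (simp add: dist_real_def)
    moreover have "k (G u) = a * u + b" using e1 u by simp
    ultimately have "\<mu> * G u = a * u + b - c" by simp
    then have "G u = (a * u + b - c) / \<mu>" using mu by (simp add: nonzero_eq_divide_eq mult.commute)
    then show "G u = a / \<mu> * u + (b - c) / \<mu>" by (simp add: add_divide_distrib diff_divide_distrib)
  qed
qed

definition nonaff :: "(real \<Rightarrow> real) \<Rightarrow> real set" where
  "nonaff f = {t. \<not> affnear f t}"

lemma nonaff_comp: "nonaff (\<lambda>u. f (g u)) \<subseteq> nonaff g \<union> g -` nonaff f"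
  unfolding nonaff_def using affnear_comp by blast

definition local_slope :: "(real \<Rightarrow> real) \<Rightarrow> real \<Rightarrow> real" where
  "local_slope G v = (SOME a. \<exists>e>0. \<exists>b. \<forall>u. \<bar>u - v\<bar> < e \<longrightarrow> G u = a * u + b)"

lemma local_slope_spec:
  assumes "affnear G v" shows "\<exists>e>0. \<exists>b. \<forall>u. \<bar>u - v\<bar> < e \<longrightarrow> G u = local_slope G v * u + b"
proof -
  have "\<exists>a. \<exists>e>0. \<exists>b. \<forall>u. \<bar>u - v\<bar> < e \<longrightarrow> G u = a * u + b" using assms unfolding affnear_def by blast
  then show ?thesis unfolding local_slope_def by (rule someI_ex)
qed

lemma local_slope_eq:
  assumes e: "e > 0" "\<And>u. \<bar>u - v\<bar> < e \<Longrightarrow> G u = a * u + b" shows "local_slope G v = a"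
proof -
  have "affnear G v" using e by (rule affnearI)
  then obtain e' b' where e': "e' > 0" "\<forall>u. \<bar>u - v\<bar> < e' \<longrightarrow> G u = local_slope G v * u + b'"
    using local_slope_spec[OF \<open>affnear G v\<close>] by blast
  define m where "m = min e e'"
  have m: "m > 0" using e(1) e'(1) unfolding m_def by simp
  have agree: "a * u + b = local_slope G v * u + b'" if "\<bar>u - v\<bar> < m" for u
  proof -
    have "\<bar>u - v\<bar> < e" "\<bar>u - v\<bar> < e'" using that unfolding m_def by auto
    have "G u = a * u + b" using e(2) \<open>\<bar>u - v\<bar> < e\<close> by simp
    moreover have "G u = local_slope G v * u + b'" using e'(2) \<open>\<bar>u - v\<bar> < e'\<close> by simp
    ultimately show ?thesis by simp
  qed
  have "a * v + b = local_slope G v * v + b'" by (rule agree) (use m in simp)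
  moreover have "a * (v + m/2) + b = local_slope G v * (v + m/2) + b'" by (rule agree) (use m in simp)
  ultimately show ?thesis
    using m affine_coeffs_unique(1)[of v "v + m/2" a b "local_slope G v" b'] by simp
qed

lemma local_slope_locally_const:
  assumes "affnear G v" shows "\<exists>e>0. \<forall>w. \<bar>w - v\<bar> < e \<longrightarrow> local_slope G w = local_slope G v"
proof -
  obtain e b where e: "e > 0" "\<forall>u. \<bar>u - v\<bar> < e \<longrightarrow> G u = local_slope G v * u + b"
    using local_slope_spec[OF assms] by blast
  have "local_slope G w = local_slope G v" if w: "\<bar>w - v\<bar> < e" for w
  proof (rule local_slope_eq[of "e - \<bar>w - v\<bar>" _ _ _ b])
    show "e - \<bar>w - v\<bar> > 0" using w by simp
    fix u assume "\<bar>u - w\<bar> < e - \<bar>w - v\<bar>"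
    then have "\<bar>u - v\<bar> < e" by (auto simp: abs_if split: if_splits)
    then show "G u = local_slope G v * u + b" using e by simp
  qed
  then show ?thesis using e by blast
qed

lemma local_slope_const_on_interval:
  assumes ab: "a \<le> b" and aff: "\<And>v. a \<le> v \<Longrightarrow> v \<le> b \<Longrightarrow> affnear G v"
  shows "local_slope G a = local_slope G b"
proof (rule connected_local_const[of "{a..b}" a b "local_slope G"])
  show "\<forall>v\<in>{a..b}. eventually (\<lambda>w. local_slope G v = local_slope G w) (at v within {a..b})"
  proof
    fix v assume "v \<in> {a..b}"
    then have "affnear G v" using aff by simp
    then obtain e where e: "e > 0" "\<forall>w. \<bar>w - v\<bar> < e \<longrightarrow> local_slope G w = local_slope G v"
      using local_slope_locally_const by blast
    show "eventually (\<lambda>w. local_slope G v = local_slope G w) (at v within {a..b})"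
      unfolding eventually_at
    proof (intro exI[of _ e] conjI ballI impI)
      show "e > 0" by (rule e(1))
      fix w assume "w \<in> {a..b}" "w \<noteq> v \<and> dist w v < e"
      then show "local_slope G v = local_slope G w" using e(2) by (simp add: dist_real_def)
    qed
  qed
qed (use ab in auto)

section \<open>Multiplicative subgroups of the positive reals\<close>

lemma mult_subgroup_powr_int:
  fixes H :: "real set"
  assumes one: "1 \<in> H" and mult: "\<And>a b. a \<in> H \<Longrightarrow> b \<in> H \<Longrightarrow> a * b \<in> H"
    and inv: "\<And>a. a \<in> H \<Longrightarrow> inverse a \<in> H" and g: "g \<in> H" "g > 0"
  shows "g powr real_of_int n \<in> H"
proof -
  have pow: "g ^ k \<in> H" for k by (induction k) (use one mult g in auto)
  show ?thesis
  proof (cases "0 \<le> n")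
    case True
    then have "g powr real_of_int n = g ^ nat n" using g by (simp add: powr_realpow[symmetric])
    then show ?thesis using pow by simp
  next
    case False
    then have "g powr real_of_int n = inverse (g ^ nat (- n))"
      using g by (simp add: powr_minus[symmetric] powr_realpow[symmetric])
    then show ?thesis using pow inv by simp
  qed
qed

lemma discrete_mult_subgroup_least:
  fixes H :: "real set"
  assumes mult: "\<And>a b. a \<in> H \<Longrightarrow> b \<in> H \<Longrightarrow> a * b \<in> H"
    and inv: "\<And>a. a \<in> H \<Longrightarrow> inverse a \<in> H"
    and gap: "m > 1" "\<And>h. h \<in> H \<Longrightarrow> 1 < h \<Longrightarrow> m \<le> h" and nontriv: "h0 \<in> H" "1 < h0"
  shows "\<exists>\<gamma>\<in>H. 1 < \<gamma> \<and> (\<forall>h\<in>H. 1 < h \<longrightarrow> \<gamma> \<le> h)"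
proof -
  define R where "R = {h \<in> H. 1 < h}"
  have Rne: "R \<noteq> {}" and Rb: "bdd_below R" using nontriv unfolding R_def by (auto intro: bdd_belowI[of _ 1])
  define \<gamma> where "\<gamma> = Inf R"
  have low: "\<gamma> \<le> t" if "t \<in> R" for t unfolding \<gamma>_def by (rule cInf_lower[OF that Rb])
  have gm: "m \<le> \<gamma>" unfolding \<gamma>_def by (rule cInf_greatest[OF Rne]) (use gap in \<open>auto simp: R_def\<close>)
  have close: "\<exists>t\<in>R. t < b" if "\<gamma> < b" for b
    using cInf_lessD[OF Rne, of b] that unfolding \<gamma>_def by auto
  have "\<gamma> \<in> R"
  proof (rule ccontr)
    assume nR: "\<gamma> \<notin> R"
    have "\<gamma> < \<gamma> * m" using gap gm by simp
    then obtain t1 where t1: "t1 \<in> R" "t1 < \<gamma> * m" using close by blast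
    have "\<gamma> < t1" using low[OF t1(1)] nR t1(1) by (cases "\<gamma> = t1") auto
    then obtain t2 where t2: "t2 \<in> R" "t2 < t1" using close by blast
    have "\<gamma> < t2" using low[OF t2(1)] nR t2(1) by (cases "\<gamma> = t2") auto
    have t2pos: "t2 > 0" using t2 unfolding R_def by simp
    have "t1 * inverse t2 \<in> H" using t1 t2 mult inv unfolding R_def by simp
    moreover have "1 < t1 * inverse t2" using t2 t2pos by (simp add: field_simps)
    moreover have "t1 * inverse t2 < m"
    proof -
      have "t1 < \<gamma> * m" by (rule t1(2))
      also have "\<dots> < t2 * m" using \<open>\<gamma> < t2\<close> gap by simp
      finally show ?thesis using t2pos by (simp add: field_simps)
    qed
    ultimately show False using gap(2)[of "t1 * inverse t2"] by linarith
  qed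
  then show ?thesis using low unfolding R_def by blast
qed

lemma discrete_mult_subgroup_cyclic:
  fixes H :: "real set"
  assumes pos: "H \<subseteq> {0<..}" and mult: "\<And>a b. a \<in> H \<Longrightarrow> b \<in> H \<Longrightarrow> a * b \<in> H"
    and inv: "\<And>a. a \<in> H \<Longrightarrow> inverse a \<in> H"
    and gap: "m > 1" "\<And>h. h \<in> H \<Longrightarrow> 1 < h \<Longrightarrow> m \<le> h" and nontriv: "h0 \<in> H" "1 < h0"
  shows "\<exists>\<gamma>\<in>H. H = range (\<lambda>n::int. \<gamma> powr real_of_int n)"
proof -
  obtain \<gamma> where \<gamma>: "\<gamma> \<in> H" "1 < \<gamma>" "\<And>h. h \<in> H \<Longrightarrow> 1 < h \<Longrightarrow> \<gamma> \<le> h"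
    using discrete_mult_subgroup_least[OF mult inv gap nontriv] by blast
  have one: "1 \<in> H" using mult[OF nontriv(1) inv[OF nontriv(1)]] nontriv by simp
  have powers: "\<gamma> powr real_of_int n \<in> H" for n
    using mult_subgroup_powr_int[OF one mult inv \<gamma>(1)] \<gamma>(2) by simp
  define c where "c = ln \<gamma>"
  have c: "c > 0" unfolding c_def using \<gamma> by simp
  have gpow: "\<gamma> powr a = exp (a * c)" for a unfolding c_def powr_def using \<gamma> by simp
  have gexp: "\<gamma> = exp c" unfolding c_def using \<gamma> by simp
  have "h \<in> range (\<lambda>n::int. \<gamma> powr real_of_int n)" if h: "h \<in> H" for h
  proof -
    have hpos: "h > 0" using pos h by auto
    define n where "n = \<lfloor>ln h / c\<rfloor>"
    have "real_of_int n \<le> ln h / c" "ln h / c < real_of_int n + 1" unfolding n_def by linarith+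
    then have n: "real_of_int n * c \<le> ln h" "ln h < (real_of_int n + 1) * c"
      using c by (simp_all add: pos_le_divide_eq pos_divide_less_eq)
    define z where "z = h * \<gamma> powr real_of_int (- n)"
    have zH: "z \<in> H" unfolding z_def using mult h powers by blast
    have "z = exp (ln h) * exp (- (real_of_int n * c))" unfolding z_def gpow using hpos by simp
    then have z: "z = exp (ln h - real_of_int n * c)" by (simp add: exp_add[symmetric])
    have "1 \<le> z" unfolding z using n by simp
    moreover have "z < \<gamma>" unfolding z gexp using n by (simp add: algebra_simps)
    moreover have "\<not> 1 < z"
    proof
      assume "1 < z"
      then have "\<gamma> \<le> z" by (rule \<gamma>(3)[OF zH])
      then show False using \<open>z < \<gamma>\<close> by simp
    qed
    ultimately have "ln h - real_of_int n * c = 0" unfolding z by simp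
    then have "h = exp (real_of_int n * c)" using hpos by (metis diff_eq_eq exp_ln add_0)
    then have "h = \<gamma> powr real_of_int n" using gpow by simp
    then show ?thesis by blast
  qed
  then show ?thesis using \<gamma>(1) powers by blast
qed

lemma funpow_commute_pt:
  assumes "\<And>t. y (x t) = x (y t)" shows "(y ^^ n) (x t) = x ((y ^^ n) t)"
  by (induction n) (use assms in auto)

lemma funpow_commute: assumes "y \<circ> x = x \<circ> y" shows "(y ^^ n) \<circ> x = x \<circ> (y ^^ n)"
  using funpow_commute_pt[of y x] assms by (simp add: fun_eq_iff)

lemma inv_commute: assumes "bij y" "y \<circ> x = x \<circ> y" shows "inv y \<circ> x = x \<circ> inv y"
proof -
  have yx: "\<And>t. y (x t) = x (y t)" using assms(2) by (simp add: fun_eq_iff)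
  have "inv y (x t) = x (inv y t)" for t
  proof -
    have yinv: "y (inv y t) = t" for t using assms(1) by (simp add: bij_is_surj surj_f_inv_f)
    have invy: "inv y (y t) = t" for t using assms(1) by (simp add: bij_is_inj inv_f_f)
    have "y (x (inv y t)) = x t" using yx yinv by simp
    then show ?thesis using invy by metis
  qed
  then show ?thesis by (simp add: fun_eq_iff)
qed

section \<open>The group F(r,Lambda,A)\<close>

locale admissible_triple =
  fixes r :: real and \<Lambda> A :: "real set"
  assumes adm: "admissible r \<Lambda> A"
begin

lemma r_pos: "r > 0" and Lpos: "\<And>l. l \<in> \<Lambda> \<Longrightarrow> l > 0" and L1: "1 \<in> \<Lambda>"
  and Lmult: "\<And>a b. a \<in> \<Lambda> \<Longrightarrow> b \<in> \<Lambda> \<Longrightarrow> a * b \<in> \<Lambda>"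
  and Linv: "\<And>a. a \<in> \<Lambda> \<Longrightarrow> inverse a \<in> \<Lambda>"
  and Lnt: "\<Lambda> \<noteq> {1}"
  and A0: "0 \<in> A" and Aadd: "\<And>a b. a \<in> A \<Longrightarrow> b \<in> A \<Longrightarrow> a + b \<in> A"
  and Aneg: "\<And>a. a \<in> A \<Longrightarrow> - a \<in> A" and rA: "r \<in> A"
  and LA: "\<And>l a. l \<in> \<Lambda> \<Longrightarrow> a \<in> A \<Longrightarrow> l * a \<in> A"
  using adm unfolding admissible_def by auto

lemma Adiff: "a \<in> A \<Longrightarrow> b \<in> A \<Longrightarrow> a - b \<in> A"
  using Aadd[of a "-b"] Aneg[of b] by simp

lemma slope_below_one: "\<exists>m\<in>\<Lambda>. 0 < m \<and> m < 1"
proof -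
  obtain l where l: "l \<in> \<Lambda>" "l \<noteq> 1" using Lnt L1 by blast
  have lp: "l > 0" using Lpos l by auto
  show ?thesis
  proof (cases "l < 1")
    case True then show ?thesis using l lp by auto
  next
    case False
    then have "inverse l < 1" "0 < inverse l" using l lp by (auto simp: inverse_less_1_iff)
    then show ?thesis using Linv[OF l(1)] by blast
  qed
qed

lemma A_int_mult: assumes e: "e \<in> A" shows "real_of_int k * e \<in> A"
proof -
  have nat: "real n * e \<in> A" for n
  proof (induction n)
    case 0 then show ?case using A0 by simp
  next
    case (Suc n) then show ?case using Aadd[OF Suc e] by (simp add: algebra_simps)
  qed
  show ?thesis
  proof (cases "0 \<le> k")
    case True then show ?thesis using nat[of "nat k"] by simp
  next
    case False then show ?thesis using Aneg[OF nat[of "nat (- k)"]] by simp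
  qed
qed

text \<open>A is dense: it contains r times arbitrarily small powers of a slope below 1, and the
  integer multiples of a small positive element of A meet every interval.\<close>
lemma A_dense: assumes "a < b" shows "\<exists>q\<in>A. a < q \<and> q < b"
proof -
  obtain m where m: "m \<in> \<Lambda>" "0 < m" "m < 1" using slope_below_one by blast
  have pw: "r * m ^ n \<in> A" for n
  proof (induction n)
    case 0 then show ?case using rA by simp
  next
    case (Suc n) then show ?case using LA[OF m(1) Suc] by (simp add: algebra_simps)
  qed
  obtain n where n: "m ^ n < (b - a) / r" using real_arch_pow_inv[of "(b - a) / r" m] assms m r_pos by auto
  define e where "e = r * m ^ n - r * m ^ Suc n"
  have eA: "e \<in> A" unfolding e_def using Adiff pw by blast
  have e_eq: "e = r * m ^ n * (1 - m)" unfolding e_def by (simp add: algebra_simps)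
  have epos: "e > 0" unfolding e_eq using m r_pos by auto
  have "r * m ^ n < b - a" using n r_pos by (simp add: field_simps)
  moreover have "e \<le> r * m ^ n" unfolding e_eq using m r_pos by (simp add: mult_left_le)
  ultimately have eb: "e < b - a" by simp
  define k where "k = \<lfloor>a / e\<rfloor> + 1"
  have "a / e < real_of_int k" "real_of_int k \<le> a / e + 1" unfolding k_def by linarith+
  then have "a < real_of_int k * e" "real_of_int k * e \<le> a + e"
    using epos by (simp_all add: field_simps)
  then show ?thesis using eb A_int_mult[OF eA, of k] by (intro bexI[of _ "real_of_int k * e"]) auto
qed

definition breakset :: "(real \<Rightarrow> real) \<Rightarrow> real set \<Rightarrow> bool" where
  "breakset f P \<longleftrightarrow> finite P \<and> P \<subseteq> A \<inter> {0..r} \<and> 0 \<in> P \<and> r \<in> P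
         \<and> (\<forall>p\<in>P. p < r \<longrightarrow> f p \<in> A)
         \<and> (\<forall>a\<in>P. \<forall>b\<in>P. a < b \<and> (\<forall>q\<in>P. \<not> (a < q \<and> q < b)) \<longrightarrow>
              (\<exists>l\<in>\<Lambda>. \<exists>c. \<forall>t\<in>{a..<b}. f t = l * t + c))"

lemma breakset_D:
  assumes "breakset f P"
  shows "finite P" "P \<subseteq> A \<inter> {0..r}" "0 \<in> P" "r \<in> P" "\<And>p. p \<in> P \<Longrightarrow> p < r \<Longrightarrow> f p \<in> A"
  using assms unfolding breakset_def by auto

lemma breakset_consec: "breakset f P \<Longrightarrow> consec P a b \<Longrightarrow> \<exists>l\<in>\<Lambda>. \<exists>c. \<forall>t\<in>{a..<b}. f t = l * t + c"
  unfolding breakset_def consec_def by blast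

lemma breaksetI:
  "finite P \<Longrightarrow> P \<subseteq> A \<inter> {0..r} \<Longrightarrow> 0 \<in> P \<Longrightarrow> r \<in> P \<Longrightarrow> (\<forall>p\<in>P. p < r \<longrightarrow> f p \<in> A)
  \<Longrightarrow> (\<And>a b. consec P a b \<Longrightarrow> \<exists>l\<in>\<Lambda>. \<exists>c. \<forall>t\<in>{a..<b}. f t = l * t + c) \<Longrightarrow> breakset f P"
  unfolding breakset_def consec_def by blast

lemma Fgrp_iff: "f \<in> Fgrp r \<Lambda> A \<longleftrightarrow> bij_betw f {0..<r} {0..<r} \<and> continuous_on {0..<r} f
   \<and> (\<forall>t. t \<notin> {0..<r} \<longrightarrow> f t = t) \<and> (\<exists>P. breakset f P)"
  unfolding Fgrp_def breakset_def by (simp only: mem_Collect_eq)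

lemma F_D:
  assumes "f \<in> Fgrp r \<Lambda> A"
  shows "bij_betw f {0..<r} {0..<r}" "continuous_on {0..<r} f" "\<And>t. t \<notin> {0..<r} \<Longrightarrow> f t = t"
    "\<exists>P. breakset f P"
  using assms unfolding Fgrp_iff by auto

text \<open>An element of F fixes 0: it is a continuous injection of [0,r) onto itself.\<close>
lemma F_zero:
  assumes "f \<in> Fgrp r \<Lambda> A" shows "f 0 = 0"
proof (rule ccontr)
  assume ne: "f 0 \<noteq> 0"
  have bij: "bij_betw f {0..<r} {0..<r}" and co: "continuous_on {0..<r} f" using F_D[OF assms] by auto
  have rng: "\<And>t. t \<in> {0..<r} \<Longrightarrow> f t \<in> {0..<r}" by (rule bij_betw_apply[OF bij])
  have pos: "f 0 > 0" using rng[of 0] ne r_pos by auto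
  have "0 \<in> f ` {0..<r}" using bij r_pos by (simp add: bij_betw_def)
  then obtain t where t: "t \<in> {0..<r}" "f t = 0" by auto
  have t0: "t > 0" using t ne by (cases "t = 0") auto
  define u where "u = (t + r) / 2"
  have u: "t < u" "u < r" using t unfolding u_def by auto
  have "continuous_on {0..u} f" by (rule continuous_on_subset[OF co]) (use u in auto)
  moreover have "inj_on f {0..u}" using u by (intro inj_on_subset[OF bij_betw_imp_inj_on[OF bij]]) auto
  ultimately have "(f 0 < f t \<and> f t < f u) \<or> (f u < f t \<and> f t < f 0)"
    using continuous_inj_imp_mono[of 0 t u f] t0 u by auto
  moreover have "f u \<ge> 0" using rng[of u] u t by simp
  ultimately show False using pos t by auto
qed

lemma F_smono:
  assumes "f \<in> Fgrp r \<Lambda> A" shows "strict_mono f"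
proof -
  have bij: "bij_betw f {0..<r} {0..<r}" and co: "continuous_on {0..<r} f"
    and out: "\<forall>t. t \<notin> {0..<r} \<longrightarrow> f t = t" using F_D[OF assms] by auto
  have f0: "f 0 = 0" using F_zero assms .
  have rng: "\<And>t. t \<in> {0..<r} \<Longrightarrow> f t \<in> {0..<r}" by (rule bij_betw_apply[OF bij])
  text \<open>Inside [0,r) monotonicity follows from continuity, injectivity and f 0 = 0.\<close>
  have inner: "f t1 < f t2" if "0 \<le> t1" "t1 < t2" "t2 < r" for t1 t2
  proof (cases "t1 = 0")
    case True
    have "f t2 \<noteq> f 0"
      using that bij_betw_imp_inj_on[OF bij] r_pos by (auto dest: inj_onD)
    then show ?thesis using True f0 rng[of t2] that by auto
  next
    case False
    have "continuous_on {0..t2} f" by (rule continuous_on_subset[OF co]) (use that in auto)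
    moreover have "inj_on f {0..t2}" using that by (intro inj_on_subset[OF bij_betw_imp_inj_on[OF bij]]) auto
    ultimately have "(f 0 < f t1 \<and> f t1 < f t2) \<or> (f t2 < f t1 \<and> f t1 < f 0)"
      using continuous_inj_imp_mono[of 0 t1 t2 f] that False by auto
    moreover have "f t1 \<ge> 0" using rng that by auto
    ultimately show ?thesis using f0 by auto
  qed
  show ?thesis
  proof (rule strict_monoI)
    fix t1 t2 :: real assume lt: "t1 < t2"
    consider "t1 < 0" | "0 \<le> t1" "t2 < r" | "0 \<le> t1" "t1 < r" "r \<le> t2" | "r \<le> t1" by linarith
    then show "f t1 < f t2"
    proof cases
      case 1
      have "f t2 \<ge> min t2 0" using out rng[of t2] by (cases "t2 \<in> {0..<r}") auto
      then show ?thesis using out 1 lt by auto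
    next
      case 2 then show ?thesis using inner lt by simp
    next
      case 3 then show ?thesis using out rng[of t1] by auto
    next
      case 4 then show ?thesis using out lt by auto
    qed
  qed
qed

lemma F_bij: assumes "f \<in> Fgrp r \<Lambda> A" shows "bij f"
proof -
  have bij: "bij_betw f {0..<r} {0..<r}" and out: "\<forall>t. t \<notin> {0..<r} \<longrightarrow> f t = t"
    using F_D[OF assms] by auto
  have "y \<in> range f" for y
  proof (cases "y \<in> {0..<r}")
    case True then have "y \<in> f ` {0..<r}" using bij by (simp add: bij_betw_def)
    then show ?thesis by blast
  next
    case False then show ?thesis using out by (metis rangeI)
  qed
  then show ?thesis using strict_mono_imp_inj_on[OF F_smono[OF assms]] by (auto simp: bij_def)
qed

lemma F_cont: assumes "f \<in> Fgrp r \<Lambda> A" shows "isCont f t"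
  by (rule strict_mono_surj_isCont[OF F_smono[OF assms] bij_is_surj[OF F_bij[OF assms]]])

lemma F_r: "f \<in> Fgrp r \<Lambda> A \<Longrightarrow> f r = r"
  using F_D(3)[of f r] by simp

lemma F_range: assumes "f \<in> Fgrp r \<Lambda> A" "0 \<le> t" "t \<le> r" shows "0 \<le> f t" "f t \<le> r"
  using strict_mono_less_eq[OF F_smono[OF assms(1)]] assms F_zero[OF assms(1)] F_r[OF assms(1)]
  by (metis)+

lemma F_piece:
  assumes P: "breakset f P" and t: "t \<in> {0..<r}"
  shows "\<exists>a b l c. consec P a b \<and> a \<le> t \<and> t < b \<and> l \<in> \<Lambda> \<and> (\<forall>u\<in>{a..<b}. f u = l * u + c)"
proof -
  obtain a b where ab: "consec P a b" "a \<le> t" "t < b"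
    using consec_containing[of P 0 t r] breakset_D[OF P] t by auto
  then show ?thesis using breakset_consec[OF P ab(1)] by blast
qed

lemma F_piece_offset:
  assumes P: "breakset f P" and ab: "consec P a b" and l: "l \<in> \<Lambda>"
    and lc: "\<forall>u\<in>{a..<b}. f u = l * u + c"
  shows "c \<in> A"
proof -
  have a: "a \<in> P" "a < b" using ab unfolding consec_def by auto
  have "a \<in> A" "a < r" using a breakset_D(2)[OF P] ab unfolding consec_def by auto
  then have "f a \<in> A" using breakset_D(5)[OF P] a by simp
  moreover have "c = f a - l * a" using lc a by simp
  ultimately show ?thesis using Adiff LA[OF l \<open>a \<in> A\<close>] by simp
qed

lemma F_A_iff:
  assumes f: "f \<in> Fgrp r \<Lambda> A" shows "f t \<in> A \<longleftrightarrow> t \<in> A"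
proof (cases "t \<in> {0..<r}")
  case False then show ?thesis using F_D(3)[OF f] by simp
next
  case True
  obtain P where P: "breakset f P" using F_D(4)[OF f] by auto
  obtain a b l c where abl: "consec P a b" "a \<le> t" "t < b" "l \<in> \<Lambda>" "\<forall>u\<in>{a..<b}. f u = l * u + c"
    using F_piece[OF P True] by auto
  have c: "c \<in> A" using F_piece_offset[OF P abl(1,4,5)] .
  have ft: "f t = l * t + c" using abl by auto
  have l: "l > 0" "inverse l \<in> \<Lambda>" using Lpos Linv abl(4) by auto
  show ?thesis
  proof
    assume "f t \<in> A"
    then have "inverse l * (f t - c) \<in> A" using LA[OF l(2)] Adiff c by blast
    then show "t \<in> A" using ft l by (simp add: field_simps)
  qed (use ft Aadd LA[OF abl(4)] c in auto)
qed

lemma affnear_off_breaks: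
  assumes f: "f \<in> Fgrp r \<Lambda> A" and P: "breakset f P" and t: "t \<notin> P"
  shows "affnear f t"
proof -
  have "t \<noteq> r" using t breakset_D(4)[OF P] by auto
  then consider "t < 0" | "t \<in> {0..<r}" | "t > r" by fastforce
  then show ?thesis
  proof cases
    case 1
    show ?thesis
      by (rule affnearI[of "-t" _ _ 1 0]) (use 1 F_D(3)[OF f] in \<open>auto simp: abs_less_iff\<close>)
  next
    case 3
    show ?thesis
      by (rule affnearI[of "t - r" _ _ 1 0]) (use 3 F_D(3)[OF f] in \<open>auto simp: abs_less_iff\<close>)
  next
    case 2
    obtain a b l c where abl: "consec P a b" "a \<le> t" "t < b" "\<forall>u\<in>{a..<b}. f u = l * u + c"
      using F_piece[OF P 2] by auto
    have at: "a < t" using abl(1,2) t unfolding consec_def by (cases "a = t") auto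
    show ?thesis
    proof (rule affnearI[of "min (t - a) (b - t)" _ _ l c])
      show "0 < min (t - a) (b - t)" using at abl by auto
      fix u assume "\<bar>u - t\<bar> < min (t - a) (b - t)"
      then have "u \<in> {a..<b}" by auto
      then show "f u = l * u + c" using abl(4) by blast
    qed
  qed
qed

lemma germ_right:
  assumes f: "f \<in> Fgrp r \<Lambda> A" and t: "t \<in> {0..<r}" and ft: "f t = t"
  shows "\<exists>e>0. \<exists>l\<in>\<Lambda>. \<forall>u\<in>{t..<t+e}. f u = t + l * (u - t)"
proof -
  obtain P where P: "breakset f P" using F_D(4)[OF f] by auto
  obtain a b l c where abl: "consec P a b" "a \<le> t" "t < b" "l \<in> \<Lambda>" "\<forall>u\<in>{a..<b}. f u = l * u + c"
    using F_piece[OF P t] by auto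
  have "\<forall>u\<in>{t..<t + (b - t)}. f u = t + l * (u - t)"
    using abl ft by (auto simp: algebra_simps)
  then show ?thesis using abl by (intro exI[of _ "b - t"]) auto
qed

text \<open>An element of F fixing t > 0 is linear around t on a left neighbourhood; at t itself this
  uses continuity.\<close>
lemma germ_left:
  assumes f: "f \<in> Fgrp r \<Lambda> A" and t: "0 < t" "t \<le> r" and ft: "f t = t"
  shows "\<exists>e>0. \<exists>l\<in>\<Lambda>. \<forall>u\<in>{t-e..t}. f u = t + l * (u - t)"
proof -
  obtain P where P: "breakset f P" using F_D(4)[OF f] by auto
  define a where "a = Max {q\<in>P. q < t}"
  have fa: "finite {q\<in>P. q < t}" "{q\<in>P. q < t} \<noteq> {}" using breakset_D[OF P] t by auto
  have a: "a \<in> P" "a < t" using Max_in[OF fa] unfolding a_def by auto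
  have amax: "\<And>q. q \<in> P \<Longrightarrow> q < t \<Longrightarrow> q \<le> a" unfolding a_def using fa by auto
  define t0 where "t0 = (a + t) / 2"
  have t0: "a < t0" "t0 < t" unfolding t0_def using a by auto
  have t0r: "t0 \<in> {0..<r}" using t0 a breakset_D(2)[OF P] t by auto
  obtain a1 b1 l c where abl: "consec P a1 b1" "a1 \<le> t0" "t0 < b1" "l \<in> \<Lambda>" "\<forall>u\<in>{a1..<b1}. f u = l * u + c"
    using F_piece[OF P t0r] by auto
  have "t \<le> b1"
  proof (rule ccontr)
    assume "\<not> t \<le> b1"
    then have "b1 \<le> a" using amax abl(1) unfolding consec_def by simp
    then show False using abl(3) t0 by simp
  qed
  have eq: "f u = l * u + c" if "t0 \<le> u" "u < t" for u
    using abl(2,5) \<open>t \<le> b1\<close> that by auto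
  have "f t = l * t + c"
    by (rule continuous_agree_at_left[OF F_cont[OF f] _ t0(2)]) (use eq in auto)
  then have "\<forall>u\<in>{t - (t - t0)..t}. f u = t + l * (u - t)"
    using eq ft by (auto simp: algebra_simps le_less)
  then show ?thesis using t0 abl(4) by (intro exI[of _ "t - t0"]) auto
qed

text \<open>If two elements of F agree on a left neighbourhood of a point T outside A, they agree on a
  neighbourhood of T: T is not a breakpoint, so both are affine near T.\<close>
lemma F_agree_across:
  assumes f: "f \<in> Fgrp r \<Lambda> A" and g: "g \<in> Fgrp r \<Lambda> A" and T: "T \<notin> A" "a < T"
    and agree: "\<forall>u\<in>{a..T}. f u = g u"
  shows "\<exists>T'>T. \<forall>u\<in>{T..T'}. f u = g u"
proof -
  obtain Pf Pg where P: "breakset f Pf" "breakset g Pg" using F_D(4) f g by meson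
  have "T \<notin> Pf" "T \<notin> Pg" using breakset_D(2)[OF P(1)] breakset_D(2)[OF P(2)] T by auto
  then have "affnear f T" "affnear g T" using affnear_off_breaks f g P by auto
  then obtain e1 a1 b1 e2 a2 b2 where
    e1: "e1 > 0" "\<And>u. \<bar>u - T\<bar> < e1 \<Longrightarrow> f u = a1 * u + b1" and
    e2: "e2 > 0" "\<And>u. \<bar>u - T\<bar> < e2 \<Longrightarrow> g u = a2 * u + b2"
    unfolding affnear_def by metis
  define m where "m = min (min e1 e2) (T - a) / 2"
  have m: "0 < m" "m < e1" "m < e2" "m \<le> T - a" unfolding m_def using e1 e2 T by auto
  have ag: "a1 * u + b1 = a2 * u + b2" if "T - m \<le> u" "u \<le> T" for u
  proof -
    have "f u = g u" using agree that m by auto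
    moreover have "\<bar>u - T\<bar> < e1" "\<bar>u - T\<bar> < e2" using that m by auto
    ultimately show ?thesis using e1(2) e2(2) by simp
  qed
  have neq: "T - m \<noteq> T - m/2" using m by simp
  have "a1 * (T - m) + b1 = a2 * (T - m) + b2" by (rule ag) (use m in auto)
  moreover have "a1 * (T - m/2) + b1 = a2 * (T - m/2) + b2" by (rule ag) (use m in auto)
  ultimately have coeffs: "a1 = a2" "b1 = b2" using affine_coeffs_unique[OF neq] by blast+
  have "\<forall>u\<in>{T..T + m}. f u = g u" using e1(2) e2(2) m coeffs by auto
  then show ?thesis using m by (intro exI[of _ "T + m"]) auto
qed

lemma preimage_breakset:
  assumes g: "g \<in> Fgrp r \<Lambda> A" and Pf: "breakset f Pf"
  shows "g -` Pf \<subseteq> A \<inter> {0..r}"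
proof
  fix q assume "q \<in> g -` Pf"
  then have gq: "g q \<in> A" "0 \<le> g q" "g q \<le> r" using breakset_D(2)[OF Pf] by auto
  have "q \<in> {0..r}"
    using gq(2,3) F_D(3)[OF g, of q] by (cases "q \<in> {0..<r}") auto
  then show "q \<in> A \<inter> {0..r}" using gq(1) F_A_iff[OF g] by auto
qed

text \<open>Between consecutive breakpoints of g or preimages of breakpoints of f, the interval lies in
  a piece of g, and its image lies in a piece of f; so f \<circ> g is affine there.\<close>
lemma comp_affine_between:
  assumes f: "f \<in> Fgrp r \<Lambda> A" and g: "g \<in> Fgrp r \<Lambda> A" and Pf: "breakset f Pf" and Pg: "breakset g Pg"
    and ab: "consec (Pg \<union> g -` Pf) a b" and a0: "0 \<le> a" and br: "b \<le> r"
  shows "\<exists>l\<in>\<Lambda>. \<exists>c. \<forall>t\<in>{a..<b}. f (g t) = l * t + c"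
proof -
  have smg: "strict_mono g" using F_smono[OF g] .
  have abQ: "a < b" "\<forall>q\<in>Pg \<union> g -` Pf. \<not> (a < q \<and> q < b)" using ab unfolding consec_def by auto
  obtain a1 b1 where ab1: "consec Pg a1 b1" "a1 \<le> a" "b \<le> b1"
    using consec_enclosing[OF breakset_D(1)[OF Pg] abQ(1) breakset_D(3)[OF Pg] a0 breakset_D(4)[OF Pg] br]
      abQ(2) by auto
  obtain l c where lc: "l \<in> \<Lambda>" "\<forall>u\<in>{a1..<b1}. g u = l * u + c" using breakset_consec[OF Pg ab1(1)] by auto
  have noP: "\<forall>q\<in>Pf. \<not> (g a < q \<and> q < g b)"
  proof (intro ballI notI)
    fix q assume q: "q \<in> Pf" "g a < q \<and> q < g b"
    obtain w where w: "q = g w" using surjD[OF bij_is_surj[OF F_bij[OF g]]] by blast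
    have "a < w" "w < b" using q w smg by (auto simp: strict_mono_less)
    then show False using abQ(2) q w by auto
  qed
  obtain a2 b2 where ab2: "consec Pf a2 b2" "a2 \<le> g a" "g b \<le> b2"
    using consec_enclosing[OF breakset_D(1)[OF Pf] _ breakset_D(3)[OF Pf] _ breakset_D(4)[OF Pf] _ noP]
      smg abQ(1) F_range[OF g] a0 br by (auto simp: strict_mono_less)
  obtain l2 c2 where lc2: "l2 \<in> \<Lambda>" "\<forall>u\<in>{a2..<b2}. f u = l2 * u + c2"
    using breakset_consec[OF Pf ab2(1)] by auto
  show ?thesis
  proof (intro bexI[of _ "l2 * l"] exI[of _ "l2 * c + c2"] ballI)
    show "l2 * l \<in> \<Lambda>" using Lmult lc lc2 by auto
    fix t assume t: "t \<in> {a..<b}"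
    then have gt: "g t = l * t + c" using lc ab1 by auto
    have "g a \<le> g t" "g t < g b" using t smg by (auto simp: strict_mono_less strict_mono_less_eq)
    then have "f (g t) = l2 * g t + c2" using lc2 ab2 by auto
    then show "f (g t) = l2 * l * t + (l2 * c + c2)" using gt by (simp add: algebra_simps)
  qed
qed

lemma breakset_comp:
  assumes f: "f \<in> Fgrp r \<Lambda> A" and g: "g \<in> Fgrp r \<Lambda> A" and Pf: "breakset f Pf" and Pg: "breakset g Pg"
  shows "breakset (f \<circ> g) (Pg \<union> g -` Pf)"
proof (rule breaksetI)
  show QA: "Pg \<union> g -` Pf \<subseteq> A \<inter> {0..r}"
    using breakset_D(2)[OF Pg] preimage_breakset[OF g Pf] by auto
  show "finite (Pg \<union> g -` Pf)"
    using breakset_D(1)[OF Pg] finite_vimageI[OF breakset_D(1)[OF Pf] bij_is_inj[OF F_bij[OF g]]] by auto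
  show "0 \<in> Pg \<union> g -` Pf" "r \<in> Pg \<union> g -` Pf" using breakset_D(3,4)[OF Pg] by auto
  show "\<forall>p\<in>Pg \<union> g -` Pf. p < r \<longrightarrow> (f \<circ> g) p \<in> A" using QA F_A_iff[OF f] F_A_iff[OF g] by auto
  fix a b assume ab: "consec (Pg \<union> g -` Pf) a b"
  then have "0 \<le> a" "b \<le> r" using QA unfolding consec_def by auto
  then show "\<exists>l\<in>\<Lambda>. \<exists>c. \<forall>t\<in>{a..<b}. (f \<circ> g) t = l * t + c"
    using comp_affine_between[OF f g Pf Pg ab] by simp
qed

lemma F_compose:
  assumes f: "f \<in> Fgrp r \<Lambda> A" and g: "g \<in> Fgrp r \<Lambda> A"
  shows "f \<circ> g \<in> Fgrp r \<Lambda> A"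
proof -
  obtain Pf Pg where "breakset f Pf" "breakset g Pg" using F_D(4) f g by meson
  then have "breakset (f \<circ> g) (Pg \<union> g -` Pf)" by (rule breakset_comp[OF f g])
  moreover have "continuous_on {0..<r} (f \<circ> g)"
    by (intro continuous_at_imp_continuous_on ballI continuous_at_compose F_cont[OF g] F_cont[OF f])
  ultimately show ?thesis unfolding Fgrp_iff
    using bij_betw_trans[OF F_D(1)[OF g] F_D(1)[OF f]] F_D(3)[OF f] F_D(3)[OF g] by auto
qed

lemma breakset_inv:
  assumes f: "f \<in> Fgrp r \<Lambda> A" and Pf: "breakset f Pf"
  shows "breakset (inv f) (f ` Pf)"
proof -
  define h where "h = inv f"
  have fh: "\<And>t. f (h t) = t" unfolding h_def using F_bij[OF f] by (simp add: bij_is_surj surj_f_inv_f)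
  have hf: "\<And>t. h (f t) = t" unfolding h_def using F_bij[OF f] by (simp add: bij_is_inj inv_f_f)
  have smf: "strict_mono f" using F_smono[OF f] .
  have smh: "strict_mono h" by (rule strict_mono_inv[OF smf bij_is_surj[OF F_bij[OF f]] hf])
  have "breakset h (f ` Pf)"
  proof (rule breaksetI)
    show "finite (f ` Pf)" using breakset_D(1)[OF Pf] by simp
    show QA: "f ` Pf \<subseteq> A \<inter> {0..r}"
      using breakset_D(2)[OF Pf] F_A_iff[OF f] F_range[OF f] by auto
    show "0 \<in> f ` Pf" "r \<in> f ` Pf"
      using F_zero[OF f] F_r[OF f] breakset_D(3,4)[OF Pf] by (metis image_eqI)+
    show "\<forall>p\<in>f ` Pf. p < r \<longrightarrow> h p \<in> A" using breakset_D(2)[OF Pf] hf by auto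
    fix a b assume ab: "consec (f ` Pf) a b"
    obtain a0 b0 where a0: "a0 \<in> Pf" "a = f a0" and b0: "b0 \<in> Pf" "b = f b0"
      using ab unfolding consec_def by auto
    have "consec Pf a0 b0"
      using ab a0 b0 smf unfolding consec_def by (auto simp: strict_mono_less)
    from breakset_consec[OF Pf this] obtain l c where lc: "l \<in> \<Lambda>" "\<forall>u\<in>{a0..<b0}. f u = l * u + c"
      by blast
    have lpos: "l > 0" using Lpos lc by auto
    show "\<exists>l\<in>\<Lambda>. \<exists>c. \<forall>t\<in>{a..<b}. h t = l * t + c"
    proof (intro bexI[of _ "inverse l"] exI[of _ "- c / l"] ballI)
      show "inverse l \<in> \<Lambda>" using Linv lc by auto
      fix t assume t: "t \<in> {a..<b}"
      then have "h a \<le> h t" "h t < h b" using smh by (auto simp: strict_mono_less strict_mono_less_eq)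
      then have "f (h t) = l * h t + c" using lc a0 b0 hf by auto
      then show "h t = inverse l * t + - c / l" using lpos fh by (simp add: field_simps)
    qed
  qed
  then show ?thesis unfolding h_def .
qed

lemma F_inv:
  assumes f: "f \<in> Fgrp r \<Lambda> A"
  shows "inv f \<in> Fgrp r \<Lambda> A"
proof -
  have bf: "bij f" using F_bij[OF f] .
  have hf: "\<And>t. inv f (f t) = t" using bf by (simp add: bij_is_inj inv_f_f)
  have smh: "strict_mono (inv f)" by (rule strict_mono_inv[OF F_smono[OF f] bij_is_surj[OF bf] hf])
  have "f ` {0..<r} = {0..<r}" using F_D(1)[OF f] by (simp add: bij_betw_def)
  then have "bij_betw (inv f) {0..<r} {0..<r}"
    using bij_betw_inv_into_subset[of f UNIV UNIV "{0..<r}" "{0..<r}"] bf by (simp add: bij_def bij_betw_def)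
  moreover have "continuous_on {0..<r} (inv f)"
    by (intro continuous_at_imp_continuous_on ballI strict_mono_surj_isCont[OF smh surjI[of _ f]] hf)
  moreover have "\<forall>t. t \<notin> {0..<r} \<longrightarrow> inv f t = t" using F_D(3)[OF f] hf by metis
  moreover obtain Pf where "breakset f Pf" using F_D(4)[OF f] by auto
  ultimately show ?thesis unfolding Fgrp_iff using breakset_inv[OF f] by blast
qed

lemma F_id: "id \<in> Fgrp r \<Lambda> A"
proof -
  have "breakset id {0, r}"
    by (rule breaksetI) (use A0 rA r_pos L1 in \<open>auto intro!: bexI[of _ 1] exI[of _ 0]\<close>)
  then show ?thesis unfolding Fgrp_iff by (auto simp: bij_betw_id)
qed

lemma Fsupp_D: assumes "f \<in> Fsupp r \<Lambda> A S" shows "f \<in> Fgrp r \<Lambda> A" "suppset r f \<subseteq> S"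
  using assms unfolding Fsupp_def by auto

lemma Fsupp_out: assumes "f \<in> Fsupp r \<Lambda> A S" "t \<notin> S" shows "f t = t"
proof (cases "t \<in> {0..<r}")
  case True
  then show ?thesis using Fsupp_D(2)[OF assms(1)] assms(2) unfolding suppset_def fixset_def by auto
next
  case False then show ?thesis using F_D(3)[OF Fsupp_D(1)[OF assms(1)]] by simp
qed

lemma FsuppI: assumes "f \<in> Fgrp r \<Lambda> A" "\<And>t. t \<notin> S \<Longrightarrow> f t = t" shows "f \<in> Fsupp r \<Lambda> A S"
  using assms unfolding Fsupp_def suppset_def fixset_def by auto

lemma Fsupp_comp: assumes "f \<in> Fsupp r \<Lambda> A S" "g \<in> Fsupp r \<Lambda> A S" shows "f \<circ> g \<in> Fsupp r \<Lambda> A S"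
  using assms by (intro FsuppI F_compose) (auto simp: Fsupp_D Fsupp_out)

lemma Fsupp_inv: assumes "f \<in> Fsupp r \<Lambda> A S" shows "inv f \<in> Fsupp r \<Lambda> A S"
proof (rule FsuppI[OF F_inv[OF Fsupp_D(1)[OF assms]]])
  fix t assume "t \<notin> S"
  then have "f t = t" using Fsupp_out assms by auto
  then show "inv f t = t" using bij_is_inj[OF F_bij[OF Fsupp_D(1)[OF assms]]] by (metis inv_f_f)
qed

lemma Fsupp_funpow: assumes "f \<in> Fsupp r \<Lambda> A S" shows "f ^^ n \<in> Fsupp r \<Lambda> A S"
proof (induction n)
  case 0
  have "id \<in> Fsupp r \<Lambda> A S" by (rule FsuppI[OF F_id]) simp
  then show ?case by (simp add: id_def)
next
  case (Suc n) show ?case unfolding funpow_Suc_right by (rule Fsupp_comp[OF Suc assms])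
qed

definition cent where "cent S x = centralizer_in (Fsupp r \<Lambda> A S) x"

lemma cent_iff: "y \<in> cent S x \<longleftrightarrow> y \<in> Fsupp r \<Lambda> A S \<and> y \<circ> x = x \<circ> y"
  unfolding cent_def centralizer_in_def by simp

lemma cent_comp: assumes "y \<in> cent S x" "z \<in> cent S x" shows "y \<circ> z \<in> cent S x"
proof -
  have "(y \<circ> z) \<circ> x = x \<circ> (y \<circ> z)" using assms unfolding cent_iff by (metis comp_assoc)
  then show ?thesis using Fsupp_comp assms cent_iff by simp
qed

lemma cent_inv: assumes "y \<in> cent S x" shows "inv y \<in> cent S x"
  using assms inv_commute[OF F_bij[OF Fsupp_D(1)]] Fsupp_inv unfolding cent_iff by blast

lemma cent_funpow: assumes "y \<in> cent S x" shows "y ^^ n \<in> cent S x"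
  using assms Fsupp_funpow funpow_commute unfolding cent_iff by blast

lemma cent_zpow: assumes "y \<in> cent S x" shows "zpow y n \<in> cent S x"
  unfolding zpow_def using cent_funpow[OF assms] cent_funpow[OF cent_inv[OF assms]] by simp

lemma cent_inv_eq: assumes "bij x" shows "cent S (inv x) = cent S x"
proof -
  have "y \<circ> inv x = inv x \<circ> y \<longleftrightarrow> y \<circ> x = x \<circ> y" for y
  proof
    assume "y \<circ> inv x = inv x \<circ> y"
    then have "inv (inv x) \<circ> y = y \<circ> inv (inv x)"
      using inv_commute[OF bij_imp_bij_inv[OF assms], of y] by simp
    then show "y \<circ> x = x \<circ> y" using inv_inv_eq[OF assms] by simp
  next
    assume "y \<circ> x = x \<circ> y"
    then show "y \<circ> inv x = inv x \<circ> y" using inv_commute[OF assms, of y] by simp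
  qed
  then show ?thesis by (simp add: set_eq_iff cent_iff)
qed

end

section \<open>The centraliser and its germ slopes\<close>

definition right_germ_slope :: "real set \<Rightarrow> real \<Rightarrow> (real \<Rightarrow> real) \<Rightarrow> real" where
  "right_germ_slope \<Lambda> a y = (SOME l. l \<in> \<Lambda> \<and> (\<exists>e>0. \<forall>u\<in>{a..<a+e}. y u = a + l * (u - a)))"

locale centraliser_setting = admissible_triple +
  fixes \<alpha> \<beta> :: real and x :: "real \<Rightarrow> real"
  assumes al: "\<alpha> \<in> {0..r} \<inter> A" and be: "\<beta> \<in> {0..r} \<inter> A" and ab: "\<alpha> < \<beta>"
    and xF: "x \<in> Fsupp r \<Lambda> A {\<alpha><..<\<beta>}"
    and xfix: "fixset r x \<inter> {\<alpha><..<\<beta>} \<inter> A = {}"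
begin

abbreviation "I \<equiv> {\<alpha><..<\<beta>}"
abbreviation "C \<equiv> cent I x"
abbreviation "rho \<equiv> right_germ_slope \<Lambda> \<alpha>"

lemma alpha_beta_bounds: "\<alpha> < r" "0 \<le> \<alpha>" "\<beta> \<le> r" using al be ab by auto

lemma x_in_F: "x \<in> Fgrp r \<Lambda> A" using Fsupp_D(1)[OF xF] .
lemma x_bij: "bij x" using F_bij[OF x_in_F] .
lemma x_smono: "strict_mono x" using F_smono[OF x_in_F] .
lemma x_alpha: "x \<alpha> = \<alpha>" and x_beta: "x \<beta> = \<beta>" using Fsupp_out[OF xF] by auto

lemma C_in_F: "y \<in> C \<Longrightarrow> y \<in> Fgrp r \<Lambda> A" using cent_iff Fsupp_D(1) by blast

lemma C_comm: "y \<in> C \<Longrightarrow> y (x t) = x (y t)"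
  using cent_iff[of y I x] by (auto simp: fun_eq_iff)

lemma x_in_C: "x \<in> C" using cent_iff xF by simp

lemma C_fix_out: "y \<in> C \<Longrightarrow> t \<notin> I \<Longrightarrow> y t = t"
  using cent_iff Fsupp_out by blast

lemma fix_not_A: assumes "t \<in> I" "x t = t" shows "t \<notin> A"
proof
  assume "t \<in> A"
  then have "t \<in> fixset r x \<inter> I \<inter> A" using assms alpha_beta_bounds unfolding fixset_def by auto
  then show False using xfix by blast
qed

text \<open>Agreement of two elements of C on [alpha,T] extends beyond T: if x moves T, transport the
  agreement by x or x\<inverse>; if x fixes T, then T is not in A and both are affine near T.\<close>
lemma C_agree_extend:
  assumes y: "y \<in> C" and z: "z \<in> C" and T: "\<alpha> < T" "T < \<beta>" and agree: "\<forall>u\<in>{\<alpha>..T}. y u = z u"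
  shows "\<exists>T'>T. \<forall>u\<in>{T..T'}. y u = z u"
proof -
  consider "T < x T" | "x T < T" | "x T = T" by linarith
  then show ?thesis
  proof cases
    case 1
    have "\<forall>u\<in>{\<alpha>..x T}. y u = z u"
      by (rule agreement_transport[OF x_smono bij_is_surj[OF x_bij] x_alpha C_comm[OF y] C_comm[OF z] agree])
    then show ?thesis using 1 T by (intro exI[of _ "x T"]) auto
  next
    case 2
    have inv_comm: "w (inv x t) = inv x (w t)" if "w \<in> C" for w t
    proof -
      have "w \<in> cent I (inv x)" using that cent_inv_eq[OF x_bij] by simp
      then have "w \<circ> inv x = inv x \<circ> w" unfolding cent_iff by simp
      then show ?thesis by (metis comp_apply)
    qed
    have x_inv: "x (inv x t) = t" for t using x_bij by (simp add: bij_is_surj surj_f_inv_f)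
    have sm: "strict_mono (inv x)"
      by (rule strict_mono_inv[OF x_smono bij_is_surj[OF x_bij]]) (simp add: x_bij bij_is_inj)
    have "inv x \<alpha> = \<alpha>" using x_alpha x_bij by (simp add: bij_is_inj inv_f_eq)
    then have "\<forall>u\<in>{\<alpha>..inv x T}. y u = z u"
      by (rule agreement_transport[OF sm bij_is_surj[OF bij_imp_bij_inv[OF x_bij]] _
            inv_comm[OF y] inv_comm[OF z] agree])
    moreover have "T < inv x T" using 2 x_inv[of T] strict_mono_less[OF x_smono] by metis
    ultimately show ?thesis using T by (intro exI[of _ "inv x T"]) auto
  next
    case 3
    then have "T \<notin> A" using fix_not_A T by simp
    then show ?thesis using F_agree_across[OF C_in_F[OF y] C_in_F[OF z] _ T(1) agree] by blast
  qed
qed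

lemma C_inj:
  assumes y: "y \<in> C" and z: "z \<in> C" and e: "e > 0"
    and agree: "\<And>u. \<alpha> \<le> u \<Longrightarrow> u < \<alpha> + e \<Longrightarrow> y u = z u"
  shows "y = z"
proof
  fix t
  have "\<forall>u\<in>{\<alpha>..\<beta>}. y u = z u"
    by (rule agreement_continuation[OF ab F_cont[OF C_in_F[OF y]] F_cont[OF C_in_F[OF z]] e agree])
       (use C_agree_extend[OF y z] in auto)
  then show "y t = z t" using C_fix_out[OF y] C_fix_out[OF z] by (cases "t \<in> I") auto
qed

lemma rho_spec:
  assumes "y \<in> C" shows "rho y \<in> \<Lambda>" "\<exists>e>0. \<forall>u\<in>{\<alpha>..<\<alpha>+e}. y u = \<alpha> + rho y * (u - \<alpha>)"
proof -
  have "y \<alpha> = \<alpha>" using C_fix_out[OF assms] by simp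
  moreover have "\<alpha> \<in> {0..<r}" using alpha_beta_bounds by simp
  ultimately have "\<exists>l. l \<in> \<Lambda> \<and> (\<exists>e>0. \<forall>u\<in>{\<alpha>..<\<alpha>+e}. y u = \<alpha> + l * (u - \<alpha>))"
    using germ_right[OF C_in_F[OF assms]] by blast
  then have "rho y \<in> \<Lambda> \<and> (\<exists>e>0. \<forall>u\<in>{\<alpha>..<\<alpha>+e}. y u = \<alpha> + rho y * (u - \<alpha>))"
    unfolding right_germ_slope_def by (rule someI_ex)
  then show "rho y \<in> \<Lambda>" "\<exists>e>0. \<forall>u\<in>{\<alpha>..<\<alpha>+e}. y u = \<alpha> + rho y * (u - \<alpha>)" by auto
qed

lemma rho_pos: "y \<in> C \<Longrightarrow> rho y > 0" using rho_spec Lpos by blast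

text \<open>The slope rho y is determined by any interval of linearity, so rho is a homomorphism.\<close>
lemma rho_unique:
  assumes y: "y \<in> C" and e: "e > 0" and l: "\<And>u. \<alpha> \<le> u \<Longrightarrow> u < \<alpha> + e \<Longrightarrow> y u = \<alpha> + l * (u - \<alpha>)"
  shows "rho y = l"
proof -
  obtain e' where e': "e' > 0" "\<forall>u\<in>{\<alpha>..<\<alpha>+e'}. y u = \<alpha> + rho y * (u - \<alpha>)" using rho_spec[OF y] by blast
  define u where "u = \<alpha> + min e e' / 2"
  have u: "\<alpha> \<le> u" "u < \<alpha> + e" "u < \<alpha> + e'" "u \<noteq> \<alpha>" unfolding u_def using e e' by auto
  have "y u = \<alpha> + rho y * (u - \<alpha>)" using e'(2) u by simp
  moreover have "y u = \<alpha> + l * (u - \<alpha>)" by (rule l) (use u in auto)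
  ultimately have "(rho y - l) * (u - \<alpha>) = 0" by (simp add: algebra_simps)
  then show ?thesis using u(4) by simp
qed

lemma rho_inj: assumes "y \<in> C" "z \<in> C" "rho y = rho z" shows "y = z"
proof -
  obtain e1 where e1: "e1 > 0" "\<forall>u\<in>{\<alpha>..<\<alpha>+e1}. y u = \<alpha> + rho y * (u - \<alpha>)" using rho_spec[OF assms(1)] by blast
  obtain e2 where e2: "e2 > 0" "\<forall>u\<in>{\<alpha>..<\<alpha>+e2}. z u = \<alpha> + rho z * (u - \<alpha>)" using rho_spec[OF assms(2)] by blast
  show ?thesis
    by (rule C_inj[OF assms(1,2), of "min e1 e2"]) (use e1 e2 assms(3) in auto)
qed

lemma rho_comp: assumes y: "y \<in> C" and z: "z \<in> C" shows "rho (y \<circ> z) = rho y * rho z"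
proof -
  obtain e1 where e1: "e1 > 0" "\<forall>u\<in>{\<alpha>..<\<alpha>+e1}. y u = \<alpha> + rho y * (u - \<alpha>)" using rho_spec[OF y] by blast
  obtain e2 where e2: "e2 > 0" "\<forall>u\<in>{\<alpha>..<\<alpha>+e2}. z u = \<alpha> + rho z * (u - \<alpha>)" using rho_spec[OF z] by blast
  have zp: "rho z > 0" using rho_pos[OF z] .
  define e where "e = min e2 (e1 / rho z)"
  have epos: "e > 0" unfolding e_def using e1 e2 zp by simp
  show ?thesis
  proof (rule rho_unique[OF cent_comp[OF y z] epos])
    fix u assume u: "\<alpha> \<le> u" "u < \<alpha> + e"
    then have zu: "z u = \<alpha> + rho z * (u - \<alpha>)" using e2 unfolding e_def by auto
    have "rho z * (u - \<alpha>) < rho z * (e1 / rho z)" using u zp unfolding e_def by (intro mult_strict_left_mono) auto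
    then have "rho z * (u - \<alpha>) < e1" using zp by simp
    moreover have "0 \<le> rho z * (u - \<alpha>)" using zp u by simp
    ultimately have "y (z u) = \<alpha> + rho y * (rho z * (u - \<alpha>))" using e1 zu by auto
    then show "(y \<circ> z) u = \<alpha> + rho y * rho z * (u - \<alpha>)" by (simp add: algebra_simps)
  qed
qed

lemma rho_id: "rho id = 1"
proof -
  have "id \<in> C" using cent_iff FsuppI[OF F_id] by auto
  then show ?thesis using rho_unique[of id 1 1] by simp
qed

lemma rho_inv: assumes y: "y \<in> C" shows "rho (inv y) = inverse (rho y)"
proof -
  note rho_id
  moreover have "y \<circ> inv y = id" using bij_is_surj[OF F_bij[OF C_in_F[OF y]]] by (simp add: surj_iff)
  ultimately have "rho (y \<circ> inv y) = 1" by (simp only:)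
  then have "rho y * rho (inv y) = 1" using rho_comp[OF y cent_inv[OF y]] by simp
  then show ?thesis using rho_pos[OF y] by (simp add: inverse_eq_divide field_simps)
qed

lemma rho_zpow: assumes y: "y \<in> C" shows "rho (zpow y n) = rho y powr real_of_int n"
proof -
  have pow: "rho (w ^^ k) = rho w ^ k" if w: "w \<in> C" for w k
  proof (induction k)
    case 0 show ?case unfolding funpow.simps(1) power_0 by (rule rho_id)
  next
    case (Suc k)
    have "rho (w ^^ Suc k) = rho w * rho (w ^^ k)"
      unfolding funpow.simps(2) by (rule rho_comp[OF w cent_funpow[OF w]])
    then show ?case by (simp only: Suc.IH power_Suc)
  qed
  show ?thesis
  proof (cases "0 \<le> n")
    case True
    then have "rho y powr real_of_int n = rho y ^ nat n"
      using powr_realpow[OF rho_pos[OF y], of "nat n"] by simp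
    then show ?thesis unfolding zpow_def using True pow[OF y] by simp
  next
    case False
    then have "rho (zpow y n) = inverse (rho y) ^ nat (- n)"
      unfolding zpow_def using pow[OF cent_inv[OF y]] rho_inv[OF y] by simp
    then show ?thesis using False rho_pos[OF y]
      by (simp add: powr_minus[symmetric] powr_realpow[symmetric] power_inverse powr_realpow)
  qed
qed

text \<open>x itself has a nontrivial germ at alpha: slope 1 would make x fix points of A near alpha.\<close>
lemma rho_x_ne_1: "rho x \<noteq> 1"
proof
  assume s1: "rho x = 1"
  obtain e where e: "e > 0" "\<forall>u\<in>{\<alpha>..<\<alpha>+e}. x u = \<alpha> + rho x * (u - \<alpha>)" using rho_spec[OF x_in_C] by blast
  obtain q where q: "q \<in> A" "\<alpha> < q" "q < min (\<alpha> + e) \<beta>" using A_dense[of \<alpha> "min (\<alpha> + e) \<beta>"] e ab by auto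
  then have "x q = q" using e s1 by auto
  then show False using fix_not_A q by auto
qed

text \<open>If the germ slopes of C above 1 are bounded away from 1, then C is cyclic: rho(C) is a
  discrete subgroup of the positive reals, hence cyclic, and rho is injective.\<close>
lemma C_cyclic_if_gap:
  assumes gap: "m > 1" "\<And>y. y \<in> C \<Longrightarrow> 1 < rho y \<Longrightarrow> m \<le> rho y"
  shows "cyclic_set C"
proof -
  have "\<exists>y\<in>C. 1 < rho y"
  proof (cases "1 < rho x")
    case False
    then have "1 < rho (inv x)" using rho_x_ne_1 rho_pos[OF x_in_C] rho_inv[OF x_in_C]
      by (simp add: one_less_inverse)
    then show ?thesis using cent_inv[OF x_in_C] by blast
  qed (use x_in_C in blast)
  then obtain h0 where h0: "h0 \<in> rho ` C" "1 < h0" by blast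
  have mult: "a * b \<in> rho ` C" if ab: "a \<in> rho ` C" "b \<in> rho ` C" for a b
  proof -
    obtain y z where yz: "y \<in> C" "z \<in> C" "a = rho y" "b = rho z" using ab by blast
    then have "a * b = rho (y \<circ> z)" using rho_comp by simp
    then show ?thesis using cent_comp[OF yz(1,2)] by blast
  qed
  have inv: "inverse a \<in> rho ` C" if a: "a \<in> rho ` C" for a
  proof -
    obtain y where y: "y \<in> C" "a = rho y" using a by blast
    then have "inverse a = rho (inv y)" using rho_inv by simp
    then show ?thesis using cent_inv[OF y(1)] by blast
  qed
  have pos: "rho ` C \<subseteq> {0<..}" using rho_pos by auto
  have gapH: "m \<le> h" if "h \<in> rho ` C" "1 < h" for h using that gap(2) by auto
  obtain \<gamma> where \<gamma>: "\<gamma> \<in> rho ` C" "rho ` C = range (\<lambda>n::int. \<gamma> powr real_of_int n)"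
    using discrete_mult_subgroup_cyclic[OF pos mult inv gap(1) gapH h0] by blast
  obtain g where g: "g \<in> C" "rho g = \<gamma>" using \<gamma>(1) by blast
  have "y \<in> range (zpow g)" if y: "y \<in> C" for y
  proof -
    obtain n where "rho y = \<gamma> powr real_of_int n" using \<gamma>(2) y by blast
    then have "rho y = rho (zpow g n)" using rho_zpow[OF g(1)] g(2) by simp
    then show ?thesis using rho_inj[OF y cent_zpow[OF g(1)]] by blast
  qed
  then have "C = range (zpow g)" using cent_zpow[OF g(1)] by blast
  then show ?thesis unfolding cyclic_set_def cent_def by blast
qed

end

section \<open>Discreteness of the germ slopes\<close>

locale expanding_at_alpha = centraliser_setting +
  fixes s \<delta> :: real
  assumes dpos: "\<delta> > 0" and dle: "\<alpha> + \<delta> \<le> \<beta>" and s1: "s > 1"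
    and xlin: "\<And>t. \<alpha> \<le> t \<Longrightarrow> t < \<alpha> + \<delta> \<Longrightarrow> x t = \<alpha> + s * (t - \<alpha>)"
begin

lemma x_cont: "isCont x t" using F_cont[OF x_in_F] .

lemma xpow_smono: "strict_mono (x ^^ n)"
  by (induction n) (use x_smono in \<open>auto simp: strict_mono_def\<close>)

lemma xpow_cont: "isCont (x ^^ n) t"
proof (induction n arbitrary: t)
  case (Suc n) then show ?case using isCont_o2[OF Suc x_cont] by (simp add: comp_def)
qed simp

lemma C_comm_pow: assumes y: "y \<in> C" shows "y ((x ^^ n) t) = (x ^^ n) (y t)"
  using funpow_commute_pt[of x y n t] C_comm[OF y] by simp

lemma xpow_alpha: "\<alpha> \<le> z \<Longrightarrow> s ^ n * (z - \<alpha>) < s * \<delta> \<Longrightarrow> (x ^^ n) z = \<alpha> + s ^ n * (z - \<alpha>)"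
proof (induction n)
  case (Suc n)
  have "s ^ n * (z - \<alpha>) * s < s * \<delta>" using Suc.prems by (simp add: algebra_simps)
  then have lt: "s ^ n * (z - \<alpha>) < \<delta>" using s1 by (simp add: mult.commute)
  have "s * \<delta> > \<delta>" using s1 dpos by simp
  then have IH: "(x ^^ n) z = \<alpha> + s ^ n * (z - \<alpha>)" using Suc lt by simp
  have nn: "0 \<le> s ^ n * (z - \<alpha>)" using s1 Suc.prems(1) by simp
  have "(x ^^ Suc n) z = \<alpha> + s * (s ^ n * (z - \<alpha>))" using IH xlin nn lt by simp
  then show ?case by (simp add: algebra_simps)
qed simp

definition p where "p = Inf {t \<in> {\<alpha>+\<delta>..\<beta>}. x t = t}"

lemma p_props: "\<alpha> + \<delta> \<le> p" "p \<le> \<beta>" "x p = p" "\<alpha> < p"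
  and p_min: "t \<in> {\<alpha>+\<delta>..\<beta>} \<Longrightarrow> x t = t \<Longrightarrow> p \<le> t"
proof -
  define FP where "FP = {t \<in> {\<alpha>+\<delta>..\<beta>}. x t = t}"
  have "closed {t. x t = t}"
    by (rule closed_Collect_eq) (auto intro!: continuous_at_imp_continuous_on x_cont continuous_intros)
  moreover have "FP = {\<alpha>+\<delta>..\<beta>} \<inter> {t. x t = t}" unfolding FP_def by auto
  ultimately have "closed FP" by (simp add: closed_Int)
  moreover have "\<beta> \<in> FP" unfolding FP_def using dle x_beta by auto
  moreover have bdd: "bdd_below FP" unfolding FP_def by (auto intro: bdd_belowI[of _ "\<alpha>+\<delta>"])
  ultimately have "p \<in> FP" unfolding p_def FP_def[symmetric] using closed_contains_Inf by blast
  then show "\<alpha> + \<delta> \<le> p" "p \<le> \<beta>" "x p = p" "\<alpha> < p" using dpos unfolding FP_def by auto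
  show "p \<le> t" if "t \<in> {\<alpha>+\<delta>..\<beta>}" "x t = t"
    unfolding p_def FP_def[symmetric] by (rule cInf_lower[OF _ bdd]) (use that in \<open>simp add: FP_def\<close>)
qed

lemma nofix: assumes "\<alpha> < t" "t < p" shows "x t \<noteq> t"
proof
  assume xt: "x t = t"
  show False
  proof (cases "t < \<alpha> + \<delta>")
    case True
    then have "x t = \<alpha> + s * (t - \<alpha>)" using xlin assms by simp
    then have "(s - 1) * (t - \<alpha>) = 0" using xt by (simp add: algebra_simps)
    then show False using s1 assms by simp
  next
    case False
    then show False using p_min[of t] xt assms p_props by fastforce
  qed
qed

lemma x_gt: assumes "\<alpha> < t" "t < p" shows "x t > t"
proof (rule ccontr)
  assume "\<not> x t > t"
  then have lt: "x t < t" using nofix assms by fastforce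
  define m where "m = min (t - \<alpha>) \<delta>"
  have "m \<le> t - \<alpha>" "m \<le> \<delta>" "m > 0" unfolding m_def using assms dpos by simp_all
  define t1 where "t1 = \<alpha> + m / 2"
  have t1: "\<alpha> < t1" "t1 < t" "t1 < \<alpha> + \<delta>" unfolding t1_def using \<open>m \<le> t - \<alpha>\<close> \<open>m \<le> \<delta>\<close> \<open>m > 0\<close> by linarith+
  have "x t1 = \<alpha> + s * (t1 - \<alpha>)" using xlin t1 by simp
  moreover have "s * (t1 - \<alpha>) > t1 - \<alpha>" using s1 t1 by simp
  ultimately have g1: "x t1 - t1 > 0" by simp
  have "continuous_on {t1..t} (\<lambda>u. x u - u)"
    by (auto intro!: continuous_at_imp_continuous_on x_cont continuous_intros)
  then obtain c where c: "t1 \<le> c" "c \<le> t" "x c - c = 0"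
    using IVT2'[of "\<lambda>u. x u - u" t 0 t1] g1 lt t1 by auto
  moreover have "c \<noteq> t" using lt c by auto
  ultimately show False using nofix[of c] t1 assms by auto
qed

lemma xpow_into: assumes "\<alpha> < t" "t < p" shows "\<alpha> < (x ^^ n) t \<and> (x ^^ n) t < p"
proof (induction n)
  case (Suc n)
  then have "x ((x ^^ n) t) < x p" using strict_mono_less[OF x_smono] by blast
  then show ?case using x_gt[of "(x ^^ n) t"] Suc p_props by auto
qed (use assms in simp)

text \<open>The x-orbit of every point of (alpha, p) converges to p, since its limit is a fixed point.\<close>
lemma orbit_conv: assumes "\<alpha> < u" "u < p" "e > 0" shows "\<exists>N. (x ^^ N) u > p - e"
proof -
  define a where "a n = (x ^^ n) u" for n
  have inc: "incseq a"
  proof (rule incseq_SucI)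
    fix n
    have "a n < x (a n)" unfolding a_def using x_gt xpow_into[OF assms(1,2)] by blast
    then show "a n \<le> a (Suc n)" unfolding a_def by simp
  qed
  have bdd: "bdd_above (range a)"
    by (rule bdd_aboveI[of _ p]) (use xpow_into[OF assms(1,2)] in \<open>auto simp: a_def intro: less_imp_le\<close>)
  define L where "L = (SUP i. a i)"
  have lim: "a \<longlonglongrightarrow> L" unfolding L_def by (rule LIMSEQ_incseq_SUP[OF bdd inc])
  have Lp: "L \<le> p" unfolding L_def
    by (rule cSUP_least) (use xpow_into[OF assms(1,2)] in \<open>auto simp: a_def less_imp_le\<close>)
  have Lu: "u \<le> L" unfolding L_def using cSUP_upper[OF _ bdd, of 0] a_def by auto
  have "(\<lambda>n. x (a n)) \<longlonglongrightarrow> x L" by (rule isCont_tendsto_compose[OF x_cont lim])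
  moreover have "(\<lambda>n. x (a n)) = (\<lambda>n. a (Suc n))" unfolding a_def by auto
  ultimately have "x L = L" using LIMSEQ_unique LIMSEQ_Suc[OF lim] by metis
  then have "L = p" using nofix[of L] Lp Lu assms by fastforce
  then have "eventually (\<lambda>n. p - e < a n) sequentially" using lim assms(3) by (auto intro: order_tendstoD)
  then show ?thesis unfolding a_def eventually_sequentially by auto
qed

text \<open>Every element of C fixes p, being a homeomorphism of [alpha, beta] that permutes the fixed
  points of x.\<close>
lemma C_p: assumes y: "y \<in> C" shows "y p = p"
proof -
  have fix_ge_p: "p \<le> t" if "\<alpha> < t" "t \<le> \<beta>" "x t = t" for t
  proof (cases "t < \<alpha> + \<delta>")
    case True
    then have "t < p" using p_props by simp
    then show ?thesis using nofix that by auto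
  qed (use that p_min in auto)
  have sm: "strict_mono y" using F_smono[OF C_in_F[OF y]] .
  have yab: "y \<alpha> = \<alpha>" "y \<beta> = \<beta>" using C_fix_out[OF y] by auto
  have "x (y p) = y p" using C_comm[OF y] p_props by metis
  moreover have "\<alpha> < y p" "y p \<le> \<beta>" using sm yab p_props by (metis strict_mono_less strict_mono_less_eq)+
  ultimately have ge: "p \<le> y p" using fix_ge_p by auto
  obtain q where q: "y q = p" using bij_is_surj[OF F_bij[OF C_in_F[OF y]]] by (metis surjD)
  have qab: "\<alpha> < q" "q \<le> \<beta>" using q p_props yab sm by (metis strict_mono_less strict_mono_less_eq)+
  have "y (x q) = y q" using C_comm[OF y] q p_props by simp
  then have "x q = q" using strict_mono_eq[OF sm] by simp
  then have "y p \<le> y q" using fix_ge_p qab sm by (simp add: strict_mono_less_eq)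
  then show ?thesis using ge q by simp
qed

lemma p_zone: "\<exists>dp s'. dp > 0 \<and> \<alpha> < p - dp \<and> 0 < s' \<and> s' < 1 \<and>
   (\<forall>u. p - dp \<le> u \<longrightarrow> u \<le> p \<longrightarrow> x u = p + s' * (u - p))"
proof -
  obtain e l where e: "e > 0" "l \<in> \<Lambda>" "\<forall>u\<in>{p-e..p}. x u = p + l * (u - p)"
    using germ_left[OF x_in_F _ _ p_props(3)] p_props alpha_beta_bounds by fastforce
  define dp where "dp = min e ((p - \<alpha>) / 2)"
  have "dp \<le> (p - \<alpha>) / 2" unfolding dp_def by (rule min.cobounded2)
  then have "2 * dp \<le> p - \<alpha>" by simp
  then have "\<alpha> < p - dp" using p_props(4) by linarith
  moreover have "dp > 0" "dp \<le> e" unfolding dp_def using e p_props by simp_all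
  ultimately have dp: "dp > 0" "dp \<le> e" "\<alpha> < p - dp" by simp_all
  have xl: "\<forall>u. p - dp \<le> u \<longrightarrow> u \<le> p \<longrightarrow> x u = p + l * (u - p)" using e dp by auto
  have "x (p - dp) > p - dp" using x_gt dp by auto
  moreover have "x (p - dp) = p + l * (p - dp - p)" using xl dp by auto
  ultimately have "l < 1" using dp by (simp add: algebra_simps)
  then show ?thesis using dp xl Lpos e by blast
qed

end

locale contracting_at_p = expanding_at_alpha +
  fixes dp s' :: real
  assumes dp: "dp > 0" "\<alpha> < p - dp" and s'1: "0 < s'" "s' < 1"
    and xp: "\<And>u. p - dp \<le> u \<Longrightarrow> u \<le> p \<Longrightarrow> x u = p + s' * (u - p)"
begin

lemma xpow_p: "p - dp \<le> z \<Longrightarrow> z \<le> p \<Longrightarrow> (x ^^ n) z = p + s' ^ n * (z - p)"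
proof (induction n)
  case (Suc n)
  have IH: "(x ^^ n) z = p + s' ^ n * (z - p)" using Suc by simp
  have sn: "0 < s' ^ n" "s' ^ n \<le> 1" using s'1 by (auto simp: power_le_one)
  have "s' ^ n * (p - z) \<le> 1 * (p - z)" using sn Suc.prems by (intro mult_right_mono) auto
  then have in1: "p - dp \<le> p + s' ^ n * (z - p)" using Suc.prems by (simp add: algebra_simps)
  have "0 \<le> s' ^ n * (p - z)" using sn Suc.prems by simp
  then have in2: "p + s' ^ n * (z - p) \<le> p" by (simp add: algebra_simps)
  have "(x ^^ Suc n) z = p + s' * (s' ^ n * (z - p))" using IH xp[OF in1 in2] by simp
  then show ?case by (simp add: algebra_simps)
qed simp

text \<open>An element of C that is linear with slope l \<le> s on some [alpha, alpha+e) is linear with the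
  same slope on all of [alpha, alpha+delta): conjugate by a power of x.\<close>
lemma y_lin_alpha:
  assumes y: "y \<in> C" and e: "e > 0" and l: "0 < l" "l \<le> s"
    and yl: "\<And>u. \<alpha> \<le> u \<Longrightarrow> u < \<alpha> + e \<Longrightarrow> y u = \<alpha> + l * (u - \<alpha>)"
    and t: "\<alpha> \<le> t" "t < \<alpha> + \<delta>"
  shows "y t = \<alpha> + l * (t - \<alpha>)"
proof -
  obtain n where n: "(t - \<alpha>) / e < s ^ n" using real_arch_pow[OF s1] by blast
  have sn: "s ^ n > 0" using s1 by simp
  define z where "z = \<alpha> + (t - \<alpha>) / s ^ n"
  have z1: "\<alpha> \<le> z" unfolding z_def using t sn by simp
  have "(t - \<alpha>) / s ^ n < e" using n sn e by (simp add: field_simps)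
  then have z2: "z < \<alpha> + e" unfolding z_def by simp
  have zs: "s ^ n * (z - \<alpha>) = t - \<alpha>" unfolding z_def using sn s1 by simp
  have "t - \<alpha> < s * \<delta>" using t s1 dpos by (smt (verit) mult_less_cancel_right1)
  then have xz: "(x ^^ n) z = t" using xpow_alpha[OF z1] zs by simp
  have "s ^ n * (\<alpha> + l * (z - \<alpha>) - \<alpha>) = l * (s ^ n * (z - \<alpha>))" by (simp add: algebra_simps)
  then have w2: "s ^ n * (\<alpha> + l * (z - \<alpha>) - \<alpha>) = l * (t - \<alpha>)" using zs by simp
  have "l * (t - \<alpha>) \<le> s * (t - \<alpha>)" using l t by (simp add: mult_right_mono)
  also have "\<dots> < s * \<delta>" using s1 t by simp
  finally have "s ^ n * (\<alpha> + l * (z - \<alpha>) - \<alpha>) < s * \<delta>" unfolding w2 .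
  moreover have "\<alpha> \<le> \<alpha> + l * (z - \<alpha>)" using l z1 by simp
  ultimately have "(x ^^ n) (\<alpha> + l * (z - \<alpha>)) = \<alpha> + l * (t - \<alpha>)"
    using xpow_alpha w2 by metis
  then show ?thesis using C_comm_pow[OF y] xz yl[OF z1 z2] by metis
qed

lemma y_lin_p:
  assumes y: "y \<in> C" and e: "e > 0" and mu: "\<And>u. p - e \<le> u \<Longrightarrow> u \<le> p \<Longrightarrow> y u = p + \<mu> * (u - p)"
    and w: "p - dp \<le> w" "w \<le> p" and yw: "p - dp \<le> y w" "y w \<le> p"
  shows "y w = p + \<mu> * (w - p)"
proof -
  obtain n where n: "s' ^ n < e / dp" using real_arch_pow_inv[of "e / dp" s'] e dp s'1 by auto
  have sn: "s' ^ n > 0" using s'1 by simp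
  have "s' ^ n * (p - w) \<le> s' ^ n * dp" using w sn by (intro mult_left_mono) auto
  also have "\<dots> < e" using n dp by (simp add: field_simps)
  finally have i1: "p - e \<le> p + s' ^ n * (w - p)" by (simp add: algebra_simps)
  have i2: "p + s' ^ n * (w - p) \<le> p" using sn w by (simp add: mult_nonneg_nonpos)
  have "y ((x ^^ n) w) = (x ^^ n) (y w)" using C_comm_pow[OF y] by simp
  then have "p + \<mu> * (s' ^ n * (w - p)) = p + s' ^ n * (y w - p)" using xpow_p w yw mu[OF i1 i2] by simp
  then have "s' ^ n * (\<mu> * (w - p)) = s' ^ n * (y w - p)" by (simp add: algebra_simps)
  then show ?thesis using sn s'1 by simp
qed

lemma y_aff_p:
  assumes y: "y \<in> C" and w: "p - dp < w" "w < p" and yw: "p - dp < y w" "y w < p"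
  shows "\<exists>\<eta>>0. \<exists>\<mu> c. \<mu> \<noteq> 0 \<and> (\<forall>u. \<bar>u - w\<bar> < \<eta> \<longrightarrow> y u = \<mu> * u + c)"
proof -
  have yF: "y \<in> Fgrp r \<Lambda> A" using C_in_F[OF y] .
  obtain e \<mu> where e: "e > 0" "\<mu> \<in> \<Lambda>" "\<forall>u\<in>{p-e..p}. y u = p + \<mu> * (u - p)"
    using germ_left[OF yF _ _ C_p[OF y]] p_props alpha_beta_bounds by fastforce
  define h where "h = min (y w - (p - dp)) (p - y w)"
  have h: "h > 0" unfolding h_def using yw by simp
  obtain e2 where e2: "e2 > 0" "\<And>u. dist u w < e2 \<Longrightarrow> dist (y u) (y w) < h"
    using F_cont[OF yF, of w] h unfolding continuous_at_eps_delta by blast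
  define \<eta> where "\<eta> = min e2 (min (w - (p - dp)) (p - w))"
  have eta: "\<eta> > 0" unfolding \<eta>_def using e2 w by simp
  have "y u = \<mu> * u + (p - \<mu> * p)" if u: "\<bar>u - w\<bar> < \<eta>" for u
  proof -
    have "dist (y u) (y w) < h" using e2 u unfolding \<eta>_def by (simp add: dist_real_def)
    then have yu: "p - dp \<le> y u" "y u \<le> p" unfolding h_def dist_real_def by auto
    have uu: "p - dp \<le> u" "u \<le> p" using u unfolding \<eta>_def by auto
    have "y u = p + \<mu> * (u - p)" by (rule y_lin_p[OF y e(1) _ uu yu]) (use e in auto)
    then show ?thesis by (simp add: algebra_simps)
  qed
  moreover have "\<mu> \<noteq> 0" using Lpos e by force
  ultimately show ?thesis using eta by blast
qed

text \<open>[u0, x u0] is a fundamental domain for x inside the linear zone near alpha.\<close>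
definition u0 where "u0 = \<alpha> + \<delta> / s ^ 3"

lemma u0_props: "\<alpha> < u0" "u0 < \<alpha> + \<delta> / s ^ 2" "\<alpha> + \<delta> / s ^ 2 < \<alpha> + \<delta> / s" "\<alpha> + \<delta> / s < \<alpha> + \<delta>"
  "x u0 = \<alpha> + \<delta> / s ^ 2"
proof -
  show "\<alpha> < u0" unfolding u0_def using dpos s1 by simp
  have "\<delta> / s ^ 3 < \<delta> / s ^ 2" using dpos s1 by (intro divide_strict_left_mono) (auto simp: power_strict_increasing)
  then show "u0 < \<alpha> + \<delta> / s ^ 2" unfolding u0_def by simp
  have "\<delta> / s ^ 2 < \<delta> / s" using dpos s1 by (intro divide_strict_left_mono) (auto simp: power2_eq_square)
  then show "\<alpha> + \<delta> / s ^ 2 < \<alpha> + \<delta> / s" by simp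
  have "\<delta> / s < \<delta>" using dpos s1 by (simp add: divide_less_eq)
  then show "\<alpha> + \<delta> / s < \<alpha> + \<delta>" by simp
  have "\<delta> / s ^ 3 < \<delta>" using dpos s1 by (simp add: divide_less_eq)
  then have "x u0 = \<alpha> + s * (u0 - \<alpha>)" using xlin u0_def dpos s1 by simp
  also have "\<dots> = \<alpha> + \<delta> / s ^ 2" unfolding u0_def using s1 by (simp add: power3_eq_cube power2_eq_square)
  finally show "x u0 = \<alpha> + \<delta> / s ^ 2" .
qed

definition G where "G = x ^^ (SOME N. p - dp < (x ^^ N) u0)"

lemma G_range: assumes "u0 \<le> v" "v \<le> \<alpha> + \<delta> / s" shows "p - dp < G v" "G v < p"
proof -
  have "\<exists>N. p - dp < (x ^^ N) u0" using orbit_conv[of u0 dp] u0_props dp p_props by auto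
  then have "p - dp < G u0" unfolding G_def by (rule someI_ex)
  moreover have "G u0 \<le> G v" unfolding G_def using assms xpow_smono by (simp add: strict_mono_less_eq)
  ultimately show "p - dp < G v" by simp
  have "\<alpha> < v" "v < p" using assms u0_props p_props by linarith+
  then show "G v < p" unfolding G_def using xpow_into by blast
qed

lemma G_comm_y: "y \<in> C \<Longrightarrow> G (y t) = y (G t)" unfolding G_def using C_comm_pow by simp

text \<open>G has only finitely many non-affine points: each is a breakpoint of some factor x.\<close>
lemma G_nonaff_finite: "finite (nonaff G)"
proof -
  have "finite (nonaff (x ^^ n))" for n
  proof (induction n)
    case 0
    have "affnear (x ^^ 0) t" for t by (rule affnearI[of 1 _ _ 1 0]) auto
    then show ?case unfolding nonaff_def by simp
  next
    case (Suc n)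
    obtain P where P: "breakset x P" using F_D(4)[OF x_in_F] by auto
    have "nonaff x \<subseteq> P" unfolding nonaff_def using affnear_off_breaks[OF x_in_F P] by auto
    then have "finite (nonaff x)" using breakset_D(1)[OF P] finite_subset by auto
    then have "finite (nonaff (x ^^ n) \<union> (x ^^ n) -` nonaff x)"
      using Suc finite_vimageI[OF _ strict_mono_imp_inj_on[OF xpow_smono]] by simp
    moreover have "nonaff (x ^^ Suc n) \<subseteq> nonaff (x ^^ n) \<union> (x ^^ n) -` nonaff x"
      using nonaff_comp[of x "x ^^ n"] by (simp add: comp_def)
    ultimately show ?case by (rule finite_subset[rotated])
  qed
  then show ?thesis unfolding G_def .
qed

text \<open>If G is affine with one slope sigma both near u0 and near x u0, then G \<circ> x = x \<circ> G, read
  off slightly to the right of u0, compares the slope s of x near u0 with its slope s' near G u0.\<close>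
lemma slope_relation:
  assumes e0: "e0 > 0" "\<forall>u. \<bar>u - u0\<bar> < e0 \<longrightarrow> G u = \<sigma> * u + b0"
    and e1: "e1 > 0" "\<forall>u. \<bar>u - x u0\<bar> < e1 \<longrightarrow> G u = \<sigma> * u + b1"
  shows "\<sigma> * s = s' * \<sigma>"
proof -
  have ux: "u0 < x u0" using u0_props by simp
  define \<eta> where "\<eta> = min (min e0 (e1 / s)) (x u0 - u0)"
  have eta: "\<eta> > 0" "\<eta> \<le> e0" "\<eta> \<le> e1 / s" "\<eta> \<le> x u0 - u0" unfolding \<eta>_def using e0(1) e1 s1 ux by simp_all
  have key: "\<sigma> * s * t + (\<sigma> * (\<alpha> - s * \<alpha>) + b1) = (s' * \<sigma>) * t + (p + s' * (b0 - p))"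
    if t: "u0 < t" "t < u0 + \<eta>" for t
  proof -
    have tx: "t \<le> x u0" using t eta by simp
    have xt: "x t = \<alpha> + s * (t - \<alpha>)" using xlin t tx u0_props by simp
    have "x t - x u0 = s * (t - u0)" using xt u0_props xlin[of u0] by (simp add: algebra_simps)
    moreover have "s * (t - u0) < s * (e1 / s)" using t eta s1 by (intro mult_strict_left_mono) auto
    ultimately have "\<bar>x t - x u0\<bar> < e1" using t s1 by simp
    then have Gx: "G (x t) = \<sigma> * (x t) + b1" using e1 by simp
    have Gt: "G t = \<sigma> * t + b0" using e0 t eta by simp
    have "p - dp < G t" "G t < p" using G_range[of t] t tx u0_props by auto
    then have "x (G t) = p + s' * (G t - p)" using xp by simp
    moreover have "G (x t) = x (G t)" unfolding G_def by (simp add: funpow_swap1)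
    ultimately have "\<sigma> * (x t) + b1 = p + s' * (\<sigma> * t + b0 - p)" using Gx Gt by simp
    then show ?thesis unfolding xt by (simp add: algebra_simps)
  qed
  show ?thesis
    by (rule affine_coeffs_unique(1)[of "u0 + \<eta>/2" "u0 + \<eta>/4"])
       (use eta key[of "u0 + \<eta>/2"] key[of "u0 + \<eta>/4"] in auto)
qed

text \<open>Hence G is not affine on all of [u0, x u0]: its slope would be constant there and nonzero,
  contradicting s > 1 > s'.\<close>
lemma exists_nonaffine_point: "\<exists>v0. u0 \<le> v0 \<and> v0 \<le> x u0 \<and> \<not> affnear G v0"
proof (rule ccontr)
  assume "\<not> ?thesis"
  then have aff: "\<And>v. u0 \<le> v \<Longrightarrow> v \<le> x u0 \<Longrightarrow> affnear G v" by blast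
  have ux: "u0 < x u0" using u0_props by simp
  define \<sigma> where "\<sigma> = local_slope G u0"
  have sig: "local_slope G (x u0) = \<sigma>"
    unfolding \<sigma>_def using local_slope_const_on_interval[of u0 "x u0" G] aff ux by simp
  have "affnear G u0" "affnear G (x u0)" using aff ux by simp_all
  then obtain e0 b0 e1 b1 where
    e0: "e0 > 0" "\<forall>u. \<bar>u - u0\<bar> < e0 \<longrightarrow> G u = \<sigma> * u + b0" and
    e1: "e1 > 0" "\<forall>u. \<bar>u - x u0\<bar> < e1 \<longrightarrow> G u = \<sigma> * u + b1"
    using local_slope_spec sig unfolding \<sigma>_def by metis
  have "\<sigma> \<noteq> 0"
  proof
    assume "\<sigma> = 0"
    then have "G (u0 + e0/2) = G u0" using e0 by simp
    moreover have "G u0 < G (u0 + e0/2)" using xpow_smono e0(1) unfolding G_def by (simp add: strict_mono_less)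
    ultimately show False by simp
  qed
  then show False using slope_relation[OF e0 e1] s1 s'1 by simp
qed

definition S where "S = nonaff G \<inter> {u0..\<alpha> + \<delta> / s}"

lemma S_finite: "finite S" unfolding S_def using G_nonaff_finite by simp

lemma S_nonempty: "card S \<ge> 1"
proof -
  obtain v0 where "u0 \<le> v0" "v0 \<le> x u0" "\<not> affnear G v0" using exists_nonaffine_point by blast
  then have "S \<noteq> {}" unfolding S_def nonaff_def using u0_props by auto
  then show ?thesis using S_finite by (simp add: Suc_leI card_gt_0_iff)
qed

text \<open>An element y of C with 1 < rho y \<le> s maps non-affine points of G in the zone to non-affine
  points: near v, y is the dilation by rho y about alpha, near G v it is affine and non-constant,
  and y \<circ> G = G \<circ> y.\<close>
lemma nonaffine_step:
  assumes y: "y \<in> C" and l: "1 < rho y" "rho y \<le> s"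
    and v: "u0 \<le> v" and v': "\<alpha> + rho y * (v - \<alpha>) \<le> \<alpha> + \<delta> / s"
    and na: "\<not> affnear G v"
  shows "\<not> affnear G (\<alpha> + rho y * (v - \<alpha>))"
proof
  define l where "l = rho y"
  define v' where "v' = \<alpha> + l * (v - \<alpha>)"
  assume "affnear G (\<alpha> + rho y * (v - \<alpha>))"
  then have a': "affnear G v'" unfolding v'_def l_def .
  obtain e where e: "e > 0" "\<forall>u\<in>{\<alpha>..<\<alpha>+e}. y u = \<alpha> + l * (u - \<alpha>)" using rho_spec[OF y] unfolding l_def by blast
  have lpos: "0 < l" "l \<le> s" "1 < l" using l unfolding l_def by auto
  have ylin: "y t = \<alpha> + l * (t - \<alpha>)" if "\<alpha> \<le> t" "t < \<alpha> + \<delta>" for t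
    by (rule y_lin_alpha[OF y e(1) lpos(1,2)]) (use e that in auto)
  have va: "\<alpha> < v" using v u0_props by simp
  have "v - \<alpha> \<le> l * (v - \<alpha>)" using lpos va by simp
  then have vv': "v \<le> v'" unfolding v'_def by simp
  have v'd: "v' \<le> \<alpha> + \<delta> / s" using v' unfolding v'_def l_def .
  have vd: "v < \<alpha> + \<delta>" using vv' v'd u0_props by simp
  have yv: "y v = v'" unfolding v'_def using ylin va vd by simp
  have ay: "affnear y v"
  proof (rule affnearI[of "min (v - \<alpha>) (\<alpha> + \<delta> - v)" _ _ l "\<alpha> - l * \<alpha>"])
    show "min (v - \<alpha>) (\<alpha> + \<delta> - v) > 0" using va vd by simp
    fix u assume "\<bar>u - v\<bar> < min (v - \<alpha>) (\<alpha> + \<delta> - v)"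
    then have "\<alpha> \<le> u" "u < \<alpha> + \<delta>" by (auto simp: abs_less_iff)
    then show "y u = l * u + (\<alpha> - l * \<alpha>)" using ylin by (simp add: algebra_simps)
  qed
  have "affnear G (y v)" using a' yv by simp
  then have "affnear (\<lambda>u. G (y u)) v" by (rule affnear_comp[OF ay])
  then have comp: "affnear (\<lambda>u. y (G u)) v" using G_comm_y[OF y] by simp
  have Gv: "p - dp < G v" "G v < p" using G_range[of v] v vv' v'd by auto
  have "y (G v) = G v'" using G_comm_y[OF y, of v] yv by simp
  then have Gv': "p - dp < y (G v)" "y (G v) < p" using G_range[of v'] v vv' v'd by auto
  obtain \<eta> \<mu> c where yaff: "\<eta> > 0" "\<mu> \<noteq> 0" "\<forall>u. \<bar>u - G v\<bar> < \<eta> \<longrightarrow> y u = \<mu> * u + c"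
    using y_aff_p[OF y Gv Gv'] by auto
  have "isCont G v" unfolding G_def by (rule xpow_cont)
  then have "affnear G v"
    by (rule affnear_cancel[where k = y, OF comp _ yaff(1) _ yaff(2)]) (use yaff(3) in auto)
  then show False using na by simp
qed

lemma dilated_nonaffine_points:
  assumes y: "y \<in> C" and l: "1 < rho y" "rho y \<le> s" and lk: "rho y ^ j \<le> s"
    and v0: "u0 \<le> v0" "v0 \<le> x u0" "\<not> affnear G v0"
  shows "\<alpha> + rho y ^ j * (v0 - \<alpha>) \<in> S"
  using lk
proof (induction j)
  case 0 then show ?case using v0 u0_props unfolding S_def nonaff_def by auto
next
  case (Suc j)
  have v0a: "\<alpha> < v0" using v0 u0_props by simp
  have "1 \<le> rho y ^ Suc j" using l by (intro one_le_power) simp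
  then have "v0 - \<alpha> \<le> rho y ^ Suc j * (v0 - \<alpha>)" using v0a by (simp add: mult_le_cancel_right1)
  then have lower: "u0 \<le> \<alpha> + rho y ^ Suc j * (v0 - \<alpha>)" using v0 by simp
  have "v0 - \<alpha> \<le> \<delta> / s ^ 2" using v0 u0_props by simp
  then have "rho y ^ Suc j * (v0 - \<alpha>) \<le> s * (\<delta> / s ^ 2)" using Suc.prems v0a s1
    by (intro mult_mono) auto
  also have "s * (\<delta> / s ^ 2) = \<delta> / s" using s1 by (simp add: power2_eq_square)
  finally have upper: "\<alpha> + rho y * (rho y ^ j * (v0 - \<alpha>)) \<le> \<alpha> + \<delta> / s" by simp
  define w where "w = \<alpha> + rho y ^ j * (v0 - \<alpha>)"
  have "rho y ^ j \<le> rho y ^ Suc j" using l by simp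
  then have "w \<in> S" unfolding w_def using Suc by simp
  then have "u0 \<le> w" "\<not> affnear G w" unfolding S_def nonaff_def by auto
  moreover have "\<alpha> + rho y * (w - \<alpha>) \<le> \<alpha> + \<delta> / s" using upper unfolding w_def by simp
  ultimately have "\<not> affnear G (\<alpha> + rho y * (w - \<alpha>))" using nonaffine_step[OF y l] by blast
  moreover have "\<alpha> + rho y * (w - \<alpha>) = \<alpha> + rho y ^ Suc j * (v0 - \<alpha>)" unfolding w_def by simp
  ultimately show ?case using lower upper unfolding S_def nonaff_def by simp
qed

text \<open>Counting: if 1 < rho y \<le> s and rho(y)^(card S) \<le> s, the card S + 1 distinct dilated points
  would all lie in S.\<close>
lemma count:
  assumes y: "y \<in> C" and l: "1 < rho y" "rho y \<le> s"
  shows "s < rho y ^ card S"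
proof (rule ccontr)
  define k where "k = card S"
  assume "\<not> s < rho y ^ card S"
  then have lk: "rho y ^ j \<le> s" if "j \<le> k" for j
  proof -
    have "rho y ^ j \<le> rho y ^ k" using that l by (intro power_increasing) auto
    then show ?thesis using \<open>\<not> s < rho y ^ card S\<close> unfolding k_def by simp
  qed
  obtain v0 where v0: "u0 \<le> v0" "v0 \<le> x u0" "\<not> affnear G v0" using exists_nonaffine_point by blast
  define v where "v j = \<alpha> + rho y ^ j * (v0 - \<alpha>)" for j
  have "v j \<in> S" if "j \<le> k" for j
    unfolding v_def by (rule dilated_nonaffine_points[OF y l lk[OF that] v0])
  then have "card (v ` {0..k}) \<le> card S" by (intro card_mono[OF S_finite]) auto
  moreover have "inj_on v {0..k}"
  proof (rule inj_onI)
    fix i j assume "v i = v j"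
    then have "rho y ^ i = rho y ^ j" using v0 u0_props unfolding v_def by simp
    then show "i = j" using l by (simp add: power_inject_exp)
  qed
  then have "card (v ` {0..k}) = k + 1" using card_image by fastforce
  ultimately show False unfolding k_def by simp
qed

lemma germ_slope_gap: "\<exists>m>1. \<forall>y\<in>C. 1 < rho y \<longrightarrow> m \<le> rho y"
proof (intro exI[of _ "root (card S) s"] conjI ballI impI)
  have k: "0 < card S" using S_nonempty by simp
  then show "1 < root (card S) s" using s1 by simp
  fix y assume y: "y \<in> C" "1 < rho y"
  have "s < rho y ^ card S"
  proof (cases "rho y \<le> s")
    case False
    have "rho y \<le> rho y ^ card S" using S_nonempty y by (simp add: self_le_power)
    then show ?thesis using False by simp
  qed (use count y in blast)
  then have "root (card S) s < root (card S) (rho y ^ card S)" using k by simp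
  also have "\<dots> = rho y" using k y by (simp add: real_root_power_cancel)
  finally show "root (card S) s \<le> rho y" by simp
qed

end

context centraliser_setting
begin

lemma germ_slope_gap_if_expanding:
  assumes s1: "1 < rho x"
  shows "\<exists>m>1. \<forall>y\<in>C. 1 < rho y \<longrightarrow> m \<le> rho y"
proof -
  obtain e where e: "e > 0" "\<forall>u\<in>{\<alpha>..<\<alpha>+e}. x u = \<alpha> + rho x * (u - \<alpha>)"
    using rho_spec[OF x_in_C] by blast
  define \<delta> where "\<delta> = min e (\<beta> - \<alpha>)"
  have "\<delta> > 0" "\<alpha> + \<delta> \<le> \<beta>" unfolding \<delta>_def using e ab by auto
  moreover have "x t = \<alpha> + rho x * (t - \<alpha>)" if "\<alpha> \<le> t" "t < \<alpha> + \<delta>" for t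
    using e that unfolding \<delta>_def by auto
  ultimately interpret expanding_at_alpha r \<Lambda> A \<alpha> \<beta> x "rho x" \<delta>
    using s1 by unfold_locales auto
  obtain dp s' where "dp > 0" "\<alpha> < p - dp" "0 < s'" "s' < 1"
    "\<And>u. p - dp \<le> u \<Longrightarrow> u \<le> p \<Longrightarrow> x u = p + s' * (u - p)"
    using p_zone by blast
  then interpret contracting_at_p r \<Lambda> A \<alpha> \<beta> x "rho x" \<delta> dp s'
    by unfold_locales auto
  show ?thesis by (rule germ_slope_gap)
qed

text \<open>x and x\<inverse> have the same fixed points, so x\<inverse> satisfies the hypotheses on x too.\<close>
lemma fixset_inv: "fixset r (inv x) = fixset r x"
proof -
  have "inv x t = t \<longleftrightarrow> x t = t" for t
    using x_bij by (metis bij_inv_eq_iff)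
  then show ?thesis unfolding fixset_def by simp
qed

text \<open>In general, either x or x\<inverse> expands near alpha; both have the same centraliser.\<close>
lemma germ_slope_gap: "\<exists>m>1. \<forall>y\<in>C. 1 < rho y \<longrightarrow> m \<le> rho y"
proof (cases "1 < rho x")
  case True then show ?thesis by (rule germ_slope_gap_if_expanding)
next
  case False
  interpret inv_setting: centraliser_setting r \<Lambda> A \<alpha> \<beta> "inv x"
    by unfold_locales (use al be ab Fsupp_inv[OF xF] xfix fixset_inv in auto)
  have "1 < rho (inv x)" using False rho_x_ne_1 rho_pos[OF x_in_C] rho_inv[OF x_in_C]
    by (simp add: one_less_inverse)
  then show ?thesis using inv_setting.germ_slope_gap_if_expanding cent_inv_eq[OF x_bij] by simp
qed

lemma C_cyclic: "cyclic_set C"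
  using germ_slope_gap C_cyclic_if_gap by blast

end

theorem lemma4p2:
  fixes r \<alpha> \<beta> :: real and \<Lambda> A :: "real set" and x :: "real \<Rightarrow> real"
  assumes "admissible r \<Lambda> A"
    and "\<alpha> \<in> {0..r} \<inter> A" and "\<beta> \<in> {0..r} \<inter> A" and "\<alpha> < \<beta>"
    and "x \<in> Fsupp r \<Lambda> A {\<alpha><..<\<beta>}"
    and "fixset r x \<inter> {\<alpha><..<\<beta>} \<inter> A = {}"
  shows "cyclic_set (centralizer_in (Fsupp r \<Lambda> A {\<alpha><..<\<beta>}) x)"
proof -
  interpret centraliser_setting r \<Lambda> A \<alpha> \<beta> x
    by unfold_locales (use assms in auto)
  show ?thesis using C_cyclic unfolding cent_def .
qed

end
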